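(* Let $F$ be a nonarchimedean local field of characteristic zero with ring of integers $R$, ramification index $e$ and residue degree $f$, and let $D^R$ be the forward derivative on the weighted Hilbert space $H^R$ of the tree of balls of $R$, as defined in the context. Then $D^R$ is invertible, with bounded inverse $(D^R)^{-1}$, and $(D^R)^{-1}$ is a compact operator. Moreover, $(D^R)^{-1}$ is a Hilbert–Schmidt operator if and only if $F=\mathbb{Q}_p$.
   Context: Let $p$ be a prime and $F$ a finite extension of $\mathbb{Q}_p$, with the unique absolute value $|\cdot|$ extending the $p$-adic absolute value of $\mathbb{Q}_p$. Let $R=\{x\in F: |x|\le 1\}$, $P=\{x\in F:|x|<1\}$, $\pi$ a uniformizer (a generator of $P$), with $|\pi|=p^{-1/e}$ ($e$ the ramification index), and let $f$ be such that $R/P$ has $p^f$ elements (so $[F:\mathbb{Q}_p]=ef$). Let $S=\{s_0=0,s_1,\dots,s_{p^f-1}\}\subset R$ be a set of representatives of $R/P$ containing $0$. For $n\ge 0$ let $X_n^R=\{\sum_{k=0}^{n-1}x_k\pi^k : x_k\in S\}$ (so $X_0^R=\{0\}$ and $X_n^R$ has $p^{nf}$ elements, one in each ball of radius $p^{-n/e}$ in $R$). Let $H^R$ be the Hilbert space of sequences $\phi=(\phi_n)_{n\ge0}$ with $\phi_n:X_n^R\to\mathbb{C}$ and $\|\phi\|^2=\sum_{n\ge0}\sum_{x\in X_n^R}|\phi_n(x)|^2p^{-nf}<\infty$ (weighted $\ell^2$ on the tree of balls of $R$, weight = volume of the ball). Define $(D\phi)_n(x)=p^{n/e}\big(\phi_n(x)-p^{-f}\sum_{s\in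 S}\phi_{n+1}(x+s\pi^n)\big)$ for $x\in X_n^R$, and let $D^R$ be $D$ on its maximal domain $\{\phi\in H^R: D\phi\in H^R\}$. *)

theory Defs
  imports "HOL-Analysis.Analysis"
begin

text \<open>Combinatorial model of the tree of balls of the ring of integers R of a
local field F with residue field of cardinality q = p^f and ramification index e.
A point x = sum_{k<n} x_k pi^k of X_n^R is encoded by its digit word
[x_0, ..., x_(n-1)] (digit i stands for the representative s_i in S, with s_0 = 0),
and x + s_i pi^n is encoded by appending i.  A vector phi of H^R is a function
phi n w, which must vanish off the words of length n.\<close>

definition words :: "nat \<Rightarrow> nat \<Rightarrow> nat list set" where
  "words q n = {w. length w = n \<and> set w \<subseteq> {..<q}}"

type_synonym tvec = "nat \<Rightarrow> nat list \<Rightarrow> complex"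

definition level_sq :: "nat \<Rightarrow> nat \<Rightarrow> tvec \<Rightarrow> nat \<Rightarrow> real" where
  "level_sq p f \<phi> n = (\<Sum>w\<in>words (p^f) n. (cmod (\<phi> n w))\<^sup>2) / real p ^ (n * f)"

definition Hspace :: "nat \<Rightarrow> nat \<Rightarrow> tvec set" where
  "Hspace p f = {\<phi>. (\<forall>n w. w \<notin> words (p^f) n \<longrightarrow> \<phi> n w = 0)
                     \<and> summable (level_sq p f \<phi>)}"

definition Hnorm :: "nat \<Rightarrow> nat \<Rightarrow> tvec \<Rightarrow> real" where
  "Hnorm p f \<phi> = sqrt (\<Sum>n. level_sq p f \<phi> n)"

definition Hinner :: "nat \<Rightarrow> nat \<Rightarrow> tvec \<Rightarrow> tvec \<Rightarrow> complex" where
  "Hinner p f \<phi> \<psi> =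
     (\<Sum>n. (\<Sum>w\<in>words (p^f) n. \<phi> n w * cnj (\<psi> n w)) / of_nat (p ^ (n * f)))"

definition Dop :: "nat \<Rightarrow> nat \<Rightarrow> nat \<Rightarrow> tvec \<Rightarrow> tvec" where
  "Dop p e f \<phi> = (\<lambda>n w. if w \<in> words (p^f) n then
      complex_of_real (real p powr (real n / real e)) *
        (\<phi> n w - (\<Sum>s<p^f. \<phi> (Suc n) (w @ [s])) / of_nat (p ^ f))
      else 0)"

definition domD :: "nat \<Rightarrow> nat \<Rightarrow> nat \<Rightarrow> tvec set" where
  "domD p e f = {\<phi> \<in> Hspace p f. Dop p e f \<phi> \<in> Hspace p f}"

definition bounded_op :: "nat \<Rightarrow> nat \<Rightarrow> (tvec \<Rightarrow> tvec) \<Rightarrow> bool" where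
  "bounded_op p f T \<longleftrightarrow> (\<forall>\<psi>\<in>Hspace p f. T \<psi> \<in> Hspace p f) \<and>
     (\<exists>C. \<forall>\<psi>\<in>Hspace p f. Hnorm p f (T \<psi>) \<le> C * Hnorm p f \<psi>)"

text \<open>Compact operator: images of bounded sequences have convergent subsequences
(H^R is a metric space, so this is relative compactness of the image of the unit ball).\<close>
definition compact_op :: "nat \<Rightarrow> nat \<Rightarrow> (tvec \<Rightarrow> tvec) \<Rightarrow> bool" where
  "compact_op p f T \<longleftrightarrow> (\<forall>\<psi>::nat \<Rightarrow> tvec. (\<forall>k. \<psi> k \<in> Hspace p f) \<longrightarrow>
       (\<exists>B. \<forall>k. Hnorm p f (\<psi> k) \<le> B) \<longrightarrow>
       (\<exists>r \<phi>. strict_mono r \<and> \<phi> \<in> Hspace p f \<and>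
          (\<lambda>k. Hnorm p f (T (\<psi> (r k)) - \<phi>)) \<longlonglongrightarrow> 0))"

definition orthonormal_basis :: "nat \<Rightarrow> nat \<Rightarrow> tvec set \<Rightarrow> bool" where
  "orthonormal_basis p f B \<longleftrightarrow> B \<subseteq> Hspace p f \<and>
     (\<forall>b\<in>B. Hnorm p f b = 1) \<and>
     (\<forall>b\<in>B. \<forall>c\<in>B. b \<noteq> c \<longrightarrow> Hinner p f b c = 0) \<and>
     (\<forall>\<phi>\<in>Hspace p f. (\<forall>b\<in>B. Hinner p f \<phi> b = 0) \<longrightarrow> \<phi> = (\<lambda>n w. 0))"

definition hilbert_schmidt :: "nat \<Rightarrow> nat \<Rightarrow> (tvec \<Rightarrow> tvec) \<Rightarrow> bool" where
  "hilbert_schmidt p f T \<longleftrightarrow> (\<exists>B. orthonormal_basis p f B \<and>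
     (\<lambda>b. (Hnorm p f (T b))\<^sup>2) summable_on B)"

end

theory Submission
  imports Defs "HOL-Library.Diagonal_Subsequence"
begin

text \<open>
  Write \<open>rho = p powr (-1/e)\<close> for the absolute value of a uniformizer and \<open>q = p^f\<close>.
  Solving \<open>D phi = psi\<close> from infinity gives the explicit inverse
  \<open>phi_n(x) = \<Sum>j. rho^(n+j) * (average of psi_(n+j) over the descendants of x)\<close>,
  whose level-\<open>n\<close> part has squared norm at most \<open>rho^(2n)\<close> times a constant times the
  squared norm of \<open>psi\<close>. This makes the inverse bounded, and compact, because the level norms
  of the image of a bounded set are uniformly dominated by a summable sequence. \<open>D\<close> is
  injective since a vector in its kernel has nondecreasing level norms.

  On the normalised indicators of the balls of level \<open>k\<close> (there are \<open>q^k\<close> of them) the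
  inverse has squared norm at most \<open>(k + 1) rho^(2k)\<close>, so the Hilbert-Schmidt sum is bounded
  by \<open>\<Sum>k. (k + 1) (q rho^2)^k\<close>, which converges for \<open>e = f = 1\<close>, where \<open>q rho = 1\<close>.
  Conversely, by Parseval the Hilbert-Schmidt sum over any orthonormal basis dominates the
  squared norms of the adjoint images of these indicators, each at least \<open>rho^(2k)\<close>; their
  sum \<open>\<Sum>k. (q rho^2)^k\<close> diverges unless \<open>e = f = 1\<close>.
\<close>

lemma words_0 [simp]: "words q 0 = {[]}"
  by (auto simp: words_def)

lemma length_words: "w \<in> words q n \<Longrightarrow> length w = n"
  by (simp add: words_def)

lemma words_append: "words q (n + j) = (\<lambda>(w, u). w @ u) ` (words q n \<times> words q j)"
proof -
  have "v \<in> (\<lambda>(w, u). w @ u) ` (words q n \<times> words q j)" if "v \<in> words q (n + j)" for v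
    using that by (auto simp: words_def intro!: image_eqI[of _ _ "(take n v, drop n v)"]
        dest: in_set_takeD in_set_dropD)
  thus ?thesis by (auto simp: words_def)
qed

lemma words_Suc: "words q (Suc n) = (\<lambda>(s, u). s # u) ` ({..<q} \<times> words q n)"
proof -
  have "v \<in> (\<lambda>(s, u). s # u) ` ({..<q} \<times> words q n)" if "v \<in> words q (Suc n)" for v
  proof -
    from that obtain s u where "v = s # u" by (cases v) (auto simp: words_def)
    with that show ?thesis by (auto simp: words_def intro!: image_eqI[of _ _ "(s, u)"])
  qed
  thus ?thesis by (auto simp: words_def)
qed

lemma finite_words [simp]: "finite (words q n)"
  by (induction n) (auto simp: words_Suc)

lemma card_words [simp]: "card (words q n) = q ^ n"
proof (induction n)
  case (Suc n)
  have "inj_on (\<lambda>(s, u). s # u) ({..<q} \<times> words q n)" by (auto simp: inj_on_def)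
  thus ?case using Suc by (simp add: words_Suc card_image card_cartesian_product)
qed simp

lemma sum_words_append:
  "(\<Sum>v\<in>words q (n + j). g v) = (\<Sum>w\<in>words q n. \<Sum>u\<in>words q j. g (w @ u))"
proof -
  have "inj_on (\<lambda>(w, u). w @ u) (words q n \<times> words q j)"
    by (auto simp: inj_on_def words_def)
  thus ?thesis by (simp add: words_append sum.reindex sum.cartesian_product split_def)
qed

lemma sum_words_Suc:
  "(\<Sum>v\<in>words q (Suc n). g v) = (\<Sum>s<q. \<Sum>u\<in>words q n. g (s # u))"
proof -
  have "inj_on (\<lambda>(s, u). s # u) ({..<q} \<times> words q n)" by (auto simp: inj_on_def)
  thus ?thesis by (simp add: words_Suc sum.reindex sum.cartesian_product split_def)
qed

lemma sum_words_snoc: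
  "(\<Sum>v\<in>words q (Suc n). g v) = (\<Sum>w\<in>words q n. \<Sum>s<q. g (w @ [s]))"
  using sum_words_append[where j = 1] by (simp add: sum_words_Suc)

lemma sum_words_prefix:
  assumes "w \<in> words q k"
  shows "(\<Sum>v\<in>words q (k + j). if take k v = w then g v else 0) = (\<Sum>u\<in>words q j. g (w @ u))"
proof -
  have "(\<Sum>v\<in>words q (k + j). if take k v = w then g v else 0) =
        (\<Sum>w'\<in>words q k. if w' = w then (\<Sum>u\<in>words q j. g (w' @ u)) else 0)"
    unfolding sum_words_append by (intro sum.cong refl) (auto dest: length_words)
  thus ?thesis using assms by simp
qed

lemma sum_Sigma_words:
  "(\<Sum>i\<in>Sigma {..<K} (words q). g i) = (\<Sum>k<K. \<Sum>w\<in>words q k. g (k, w))"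
  by (simp add: sum.Sigma)

lemma norm_sum_squared_le_card:
  fixes x :: "'a \<Rightarrow> 'b::real_normed_vector"
  shows "(norm (\<Sum>i\<in>F. x i))\<^sup>2 \<le> real (card F) * (\<Sum>i\<in>F. (norm (x i))\<^sup>2)"
proof -
  have "(norm (\<Sum>i\<in>F. x i))\<^sup>2 \<le> (\<Sum>i\<in>F. 1 * norm (x i))\<^sup>2"
    by (simp add: norm_sum power_mono)
  also have "\<dots> \<le> (\<Sum>i\<in>F. 1\<^sup>2) * (\<Sum>i\<in>F. (norm (x i))\<^sup>2)"
    by (rule Cauchy_Schwarz_ineq_sum)
  finally show ?thesis by simp
qed

lemma norm_add_squared_le:
  fixes a b :: "'a::real_normed_vector"
  shows "(norm (a + b))\<^sup>2 \<le> 2 * (norm a)\<^sup>2 + 2 * (norm b)\<^sup>2"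
proof -
  have "(norm (a + b))\<^sup>2 \<le> (norm a + norm b)\<^sup>2"
    by (simp add: norm_triangle_ineq power_mono)
  also have "\<dots> \<le> 2 * (norm a)\<^sup>2 + 2 * (norm b)\<^sup>2"
    using sum_squares_ge_zero[of "norm a - norm b" 0] by (simp add: power2_eq_square algebra_simps)
  finally show ?thesis .
qed

lemma norm_mult_cnj_le:
  fixes a b :: complex
  assumes "t > 0"
  shows "norm (a * cnj b) \<le> (t * (norm a)\<^sup>2 + (norm b)\<^sup>2 / t) / 2"
proof -
  have "0 \<le> (sqrt t * norm a - norm b / sqrt t)\<^sup>2" by simp
  also have "\<dots> = t * (norm a)\<^sup>2 + (norm b)\<^sup>2 / t - 2 * (norm a * norm b)"
    using assms by (simp add: power2_diff power_mult_distrib power_divide)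
  finally show ?thesis by (simp add: norm_mult)
qed

text \<open>Optimising over \<open>t\<close> turns the AM-GM bounds below into Cauchy-Schwarz inequalities.\<close>
lemma le_sqrt_mult_if_le_means:
  fixes X A B :: real
  assumes "A \<ge> 0" "B \<ge> 0" and means: "\<And>t. t > 0 \<Longrightarrow> X \<le> (t * A + B / t) / 2"
  shows "X \<le> sqrt A * sqrt B"
proof (cases "A > 0 \<and> B > 0")
  case True
  then have "X \<le> (sqrt B / sqrt A * A + B / (sqrt B / sqrt A)) / 2"
    by (intro means) simp
  also have "\<dots> = sqrt A * sqrt B"
    using True by (simp add: field_simps flip: real_sqrt_mult)
  finally show ?thesis .
next
  case False
  then have "A = 0 \<or> B = 0" using assms(1,2) by auto
  show ?thesis
  proof (rule ccontr)
    assume "\<not> X \<le> sqrt A * sqrt B"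
    with \<open>A = 0 \<or> B = 0\<close> have X: "X > 0" by auto
    consider "A = 0" | "B = 0" "A > 0" using \<open>A = 0 \<or> B = 0\<close> assms(1) by linarith
    then show False
    proof cases
      case 1
      define t where "t = B / X + 1"
      have "B / X \<ge> 0" using X assms(2) by simp
      then have t: "t > 0" by (simp add: t_def)
      have "B \<le> X * t"
        using X by (simp add: t_def distrib_left)
      then have "B / t \<le> X"
        using t by (simp add: divide_le_eq mult.commute)
      moreover have "X \<le> B / t / 2"
        using means[OF t] 1 by simp
      ultimately show False using X by simp
    next
      case 2
      show False using means[of "X / A"] 2 X by simp
    qed
  qed
qed

lemma weighted_Cauchy_Schwarz_suminf:
  fixes c z :: "nat \<Rightarrow> real"
  assumes c: "\<And>j. c j \<ge> 0" and z: "\<And>j. z j \<ge> 0"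
    and sc: "summable c" and sz: "summable (\<lambda>j. c j * (z j)\<^sup>2)"
  shows "summable (\<lambda>j. c j * z j)" "(\<Sum>j. c j * z j)\<^sup>2 \<le> (\<Sum>j. c j) * (\<Sum>j. c j * (z j)\<^sup>2)"
proof -
  have pt: "c j * z j \<le> (t * c j + c j * (z j)\<^sup>2 / t) / 2" if "t > 0" for t j
  proof -
    have "0 \<le> c j * (sqrt t - z j / sqrt t)\<^sup>2" using c by simp
    also have "\<dots> = c j * (t + (z j)\<^sup>2 / t - 2 * z j)"
      using that by (simp add: power2_diff power_divide)
    finally show ?thesis by (simp add: field_simps)
  qed
  have "summable (\<lambda>j. (1 * c j + c j * (z j)\<^sup>2 / 1) / 2)"
    by (intro summable_divide summable_add summable_mult sc sz)
  then show sm: "summable (\<lambda>j. c j * z j)"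
    by (rule summable_comparison_test[rotated]) (use pt[of 1] c z in auto)
  have "(\<Sum>j. c j * z j) \<le> sqrt (\<Sum>j. c j) * sqrt (\<Sum>j. c j * (z j)\<^sup>2)"
  proof (rule le_sqrt_mult_if_le_means)
    fix t :: real assume t: "t > 0"
    have "(\<lambda>j. (t * c j + c j * (z j)\<^sup>2 / t) / 2) sums ((t * (\<Sum>j. c j) + (\<Sum>j. c j * (z j)\<^sup>2) / t) / 2)"
      by (intro sums_divide sums_add sums_mult summable_sums sc sz)
    then show "(\<Sum>j. c j * z j) \<le> (t * (\<Sum>j. c j) + (\<Sum>j. c j * (z j)\<^sup>2) / t) / 2"
      using suminf_le[OF pt[OF t] sm] by (auto simp: sums_iff)
  qed (use c z in \<open>auto intro!: suminf_nonneg sc sz\<close>)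
  moreover have "(\<Sum>j. c j * z j) \<ge> 0" using c z by (auto intro!: suminf_nonneg sm)
  ultimately have "(\<Sum>j. c j * z j)\<^sup>2 \<le> (sqrt (\<Sum>j. c j) * sqrt (\<Sum>j. c j * (z j)\<^sup>2))\<^sup>2"
    by (intro power_mono) auto
  then show "(\<Sum>j. c j * z j)\<^sup>2 \<le> (\<Sum>j. c j) * (\<Sum>j. c j * (z j)\<^sup>2)"
    using c z by (simp add: power_mult_distrib suminf_nonneg sc sz)
qed

lemma summable_Suc_times_power:
  fixes x :: real
  assumes "0 \<le> x" "x < 1"
  shows "summable (\<lambda>k. (real k + 1) * x ^ k)"
proof -
  define y where "y = sqrt x"
  have y: "0 \<le> y" "y < 1" using assms by (auto simp: y_def)
  have "(\<lambda>k. real k * y ^ k + y ^ k) \<longlonglongrightarrow> 0 + 0"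
    using y by (intro tendsto_add powser_times_n_limit_0 LIMSEQ_power_zero) auto
  then have "Bseq (\<lambda>k. real k * y ^ k + y ^ k)"
    by (intro convergent_imp_Bseq convergentI)
  then obtain K where "K > 0" and K: "\<forall>k. norm (real k * y ^ k + y ^ k) \<le> K"
    by (rule BseqE)
  have "summable (\<lambda>k. K * y ^ k)" using y by (intro summable_mult) simp
  then show ?thesis
  proof (rule summable_comparison_test[rotated], intro exI[of _ 0] allI impI)
    fix k :: nat
    have "x ^ k = y ^ k * y ^ k"
      using assms by (simp add: y_def flip: power_mult_distrib)
    then have "(real k + 1) * x ^ k = (real k * y ^ k + y ^ k) * y ^ k"
      by (simp add: algebra_simps)
    also have "\<dots> \<le> K * y ^ k" using K y by (intro mult_right_mono) auto
    finally show "norm ((real k + 1) * x ^ k) \<le> K * y ^ k" using assms by simp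
  qed
qed

lemma has_sum_sum_finite:
  fixes g :: "'i \<Rightarrow> 'b \<Rightarrow> 'a::topological_comm_monoid_add"
  assumes "finite C" "\<And>i. i \<in> C \<Longrightarrow> (g i has_sum s i) B"
  shows "((\<lambda>b. \<Sum>i\<in>C. g i b) has_sum (\<Sum>i\<in>C. s i)) B"
  using assms
proof (induction C rule: finite_induct)
  case (insert i C)
  then show ?case by (simp add: has_sum_add)
qed simp

lemma summable_on_Sigma_finite_fibres:
  fixes g :: "nat \<times> 'a \<Rightarrow> real"
  assumes "\<And>k. finite (A k)" "\<And>i. i \<in> Sigma UNIV A \<Longrightarrow> g i \<ge> 0"
    and "summable (\<lambda>k. \<Sum>a\<in>A k. g (k, a))"
  shows "g summable_on Sigma UNIV A"
proof (rule summable_on_SigmaI)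
  show "((\<lambda>a. g (k, a)) has_sum (\<Sum>a\<in>A k. g (k, a))) (A k)" for k
    using assms(1) by (rule has_sum_finite)
  show "(\<lambda>k. \<Sum>a\<in>A k. g (k, a)) summable_on UNIV"
    using assms by (simp add: summable_on_UNIV_nonneg_real_iff sum_nonneg)
qed (use assms(2) in auto)

lemma pointwise_convergent_subseq:
  fixes X :: "nat \<Rightarrow> 'i::countable \<Rightarrow> 'a::heine_borel"
  assumes "\<And>i. bounded (range (\<lambda>k. X k i))"
  shows "\<exists>R. strict_mono R \<and> (\<forall>i. convergent (\<lambda>k. X (R k) i))"
proof -
  define P where "P n s \<longleftrightarrow> convergent (\<lambda>k. X (s k) (from_nat n))" for n and s :: "nat \<Rightarrow> nat"
  interpret D: subseqs P
  proof
    fix n and s :: "nat \<Rightarrow> nat"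
    have "bounded (range (\<lambda>k. X (s k) (from_nat n)))"
      by (rule bounded_subset[OF assms[of "from_nat n"]]) auto
    then obtain l R where "strict_mono R" "((\<lambda>k. X (s k) (from_nat n)) \<circ> R) \<longlonglongrightarrow> l"
      using bounded_imp_convergent_subsequence by blast
    then show "\<exists>R. strict_mono R \<and> P n (s \<circ> R)"
      by (auto simp: P_def convergent_def o_def)
  qed
  have "convergent (\<lambda>k. X (D.diagseq k) i)" for i
  proof -
    have "P (to_nat i) (D.diagseq \<circ> (+) (Suc (to_nat i)))"
      by (rule D.diagseq_holds)
        (auto simp: P_def o_def intro: convergent_subseq_convergent[unfolded o_def])
    then have "convergent (\<lambda>k. X (D.diagseq (k + Suc (to_nat i))) i)"
      by (simp add: P_def o_def add.commute)
    then obtain L where "(\<lambda>k. X (D.diagseq (k + Suc (to_nat i))) i) \<longlonglongrightarrow> L"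
      unfolding convergent_def ..
    then have "(\<lambda>k. X (D.diagseq k) i) \<longlonglongrightarrow> L"
      by (rule LIMSEQ_offset[where k = "Suc (to_nat i)"])
    then show ?thesis by (rule convergentI)
  qed
  then show ?thesis using D.subseq_diagseq by blast
qed

section \<open>The Hilbert space of the tree of balls\<close>

locale tree_hilbert_space =
  fixes p f :: nat
  assumes two_le_p: "2 \<le> p"
begin

abbreviation "q \<equiv> p ^ f"
abbreviation "Q \<equiv> real p ^ f"
abbreviation "H \<equiv> Hspace p f"
abbreviation "L \<equiv> level_sq p f"

definition sqnorm :: "tvec \<Rightarrow> real" where
  "sqnorm \<phi> = (\<Sum>n. L \<phi> n)"

lemma p_pos [simp]: "p > 0" and p_neq_0 [simp]: "p \<noteq> 0"
  using two_le_p by simp_all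

lemma Q_pos: "Q > 0"
  using two_le_p by simp

lemma Q_power_pos: "Q ^ n > 0"
  using Q_pos by simp

lemma level_sq_eq: "L \<phi> n = (\<Sum>w\<in>words q n. (cmod (\<phi> n w))\<^sup>2) / Q ^ n"
  by (simp add: level_sq_def power_mult mult.commute)

lemma level_sq_nonneg: "L \<phi> n \<ge> 0"
  by (simp add: level_sq_eq sum_nonneg)

lemma in_H_iff: "\<phi> \<in> H \<longleftrightarrow> (\<forall>n w. w \<notin> words q n \<longrightarrow> \<phi> n w = 0) \<and> summable (L \<phi>)"
  by (simp add: Hspace_def)

lemma H_vanish: "\<phi> \<in> H \<Longrightarrow> w \<notin> words q n \<Longrightarrow> \<phi> n w = 0"
  by (simp add: Hspace_def)

lemma summable_level_sq: "\<phi> \<in> H \<Longrightarrow> summable (L \<phi>)"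
  by (simp add: Hspace_def)

lemma sqnorm_nonneg: "\<phi> \<in> H \<Longrightarrow> sqnorm \<phi> \<ge> 0"
  unfolding sqnorm_def by (intro suminf_nonneg summable_level_sq level_sq_nonneg)

lemma Hnorm_eq_sqrt: "Hnorm p f \<phi> = sqrt (sqnorm \<phi>)"
  by (simp add: Hnorm_def sqnorm_def)

lemma Hnorm_squared: "\<phi> \<in> H \<Longrightarrow> (Hnorm p f \<phi>)\<^sup>2 = sqnorm \<phi>"
  by (simp add: Hnorm_eq_sqrt sqnorm_nonneg)

lemma sum_level_sq_le_sqnorm:
  assumes "\<phi> \<in> H" "finite N"
  shows "(\<Sum>n\<in>N. L \<phi> n) \<le> sqnorm \<phi>"
  unfolding sqnorm_def using assms by (intro sum_le_suminf summable_level_sq level_sq_nonneg) auto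

lemma level_sq_le_sqnorm: "\<phi> \<in> H \<Longrightarrow> L \<phi> n \<le> sqnorm \<phi>"
  using sum_level_sq_le_sqnorm[of _ "{n}"] by simp

lemma sqnorm_le_if_partial_sums_le:
  assumes "\<And>N. (\<Sum>n<N. L \<phi> n) \<le> C"
  shows "summable (L \<phi>)" "sqnorm \<phi> \<le> C"
proof -
  show "summable (L \<phi>)" by (rule summableI_nonneg_bounded[OF level_sq_nonneg assms])
  then show "sqnorm \<phi> \<le> C" unfolding sqnorm_def by (rule suminf_le_const[OF _ assms])
qed

lemma norm_coord_squared_le_level:
  assumes "w \<in> words q n"
  shows "(cmod (\<phi> n w))\<^sup>2 \<le> Q ^ n * L \<phi> n"
proof -
  have "(cmod (\<phi> n w))\<^sup>2 \<le> (\<Sum>v\<in>words q n. (cmod (\<phi> n v))\<^sup>2)"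
    using assms by (intro member_le_sum) auto
  also have "\<dots> = Q ^ n * L \<phi> n"
    using Q_power_pos[of n] two_le_p by (simp add: level_sq_eq)
  finally show ?thesis .
qed

lemma norm_coord_squared_le_sqnorm:
  assumes "\<phi> \<in> H"
  shows "(cmod (\<phi> n w))\<^sup>2 \<le> Q ^ n * sqnorm \<phi>"
proof (cases "w \<in> words q n")
  case True
  have "Q ^ n * L \<phi> n \<le> Q ^ n * sqnorm \<phi>"
    using level_sq_le_sqnorm[OF assms] Q_power_pos[of n] by (intro mult_left_mono) auto
  then show ?thesis using norm_coord_squared_le_level[OF True, of \<phi>] by linarith
qed (use assms sqnorm_nonneg Q_power_pos in \<open>simp add: H_vanish\<close>)

lemma zero_if_sqnorm_eq_0:
  assumes "\<phi> \<in> H" "sqnorm \<phi> = 0"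
  shows "\<phi> = (\<lambda>n w. 0)"
proof -
  have "\<phi> n w = 0" for n w
    using norm_coord_squared_le_sqnorm[OF assms(1), of n w] assms(2) by simp
  then show ?thesis by (simp add: fun_eq_iff)
qed

lemma level_sq_add_le: "L (\<lambda>n w. \<phi> n w + \<psi> n w) n \<le> 2 * L \<phi> n + 2 * L \<psi> n"
proof -
  have "(\<Sum>w\<in>words q n. (cmod (\<phi> n w + \<psi> n w))\<^sup>2) \<le>
        2 * (\<Sum>w\<in>words q n. (cmod (\<phi> n w))\<^sup>2) + 2 * (\<Sum>w\<in>words q n. (cmod (\<psi> n w))\<^sup>2)"
    unfolding sum_distrib_left sum.distrib[symmetric] by (intro sum_mono norm_add_squared_le)
  then have "(\<Sum>w\<in>words q n. (cmod (\<phi> n w + \<psi> n w))\<^sup>2) / Q ^ n \<le>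
      (2 * (\<Sum>w\<in>words q n. (cmod (\<phi> n w))\<^sup>2) + 2 * (\<Sum>w\<in>words q n. (cmod (\<psi> n w))\<^sup>2)) / Q ^ n"
    by (rule divide_right_mono) (use Q_power_pos in auto)
  then show ?thesis by (simp add: level_sq_eq add_divide_distrib)
qed

lemma level_sq_scale: "L (\<lambda>n w. c * \<phi> n w) n = (cmod c)\<^sup>2 * L \<phi> n"
  by (simp add: level_sq_eq norm_mult power_mult_distrib sum_distrib_left)

lemma level_sq_uminus [simp]: "L (\<lambda>n w. - \<psi> n w) n = L \<psi> n"
  by (simp add: level_sq_eq)

lemma level_sq_diff_le: "L (\<phi> - \<psi>) n \<le> 2 * L \<phi> n + 2 * L \<psi> n"
  using level_sq_add_le[of \<phi> "\<lambda>n w. - \<psi> n w" n] by (simp add: fun_diff_def)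

lemma level_sq_commute: "L (\<phi> - \<psi>) n = L (\<psi> - \<phi>) n"
  by (simp add: level_sq_eq norm_minus_commute)

lemma level_sq_zero [simp]: "L (\<lambda>n w. 0) = (\<lambda>n. 0)"
  by (simp add: level_sq_def fun_eq_iff)

lemma zero_in_H: "(\<lambda>n w. 0) \<in> H"
  by (simp add: in_H_iff)

lemma add_in_H:
  assumes "\<phi> \<in> H" "\<psi> \<in> H"
  shows "(\<lambda>n w. \<phi> n w + \<psi> n w) \<in> H"
proof -
  have "summable (\<lambda>n. 2 * L \<phi> n + 2 * L \<psi> n)"
    using assms by (intro summable_add summable_mult summable_level_sq)
  then have "summable (L (\<lambda>n w. \<phi> n w + \<psi> n w))"
    by (rule summable_comparison_test[rotated]) (simp add: level_sq_nonneg level_sq_add_le)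
  then show ?thesis using assms by (simp add: in_H_iff)
qed

lemma scale_in_H: "\<phi> \<in> H \<Longrightarrow> (\<lambda>n w. c * \<phi> n w) \<in> H"
  unfolding in_H_iff level_sq_scale by (auto intro: summable_mult)

lemma diff_in_H: "\<phi> \<in> H \<Longrightarrow> \<psi> \<in> H \<Longrightarrow> \<phi> - \<psi> \<in> H"
  using add_in_H[OF _ scale_in_H, of \<phi> \<psi> "- 1"] by (simp add: fun_diff_def)

lemma sum_in_H:
  "finite F \<Longrightarrow> F \<subseteq> H \<Longrightarrow> (\<lambda>n w. \<Sum>b\<in>F. c b * b n w) \<in> H"
proof (induction F rule: finite_induct)
  case (insert x F)
  then show ?case using add_in_H[OF scale_in_H] by simp
qed (simp add: zero_in_H)

definition level_inner :: "tvec \<Rightarrow> tvec \<Rightarrow> nat \<Rightarrow> complex" where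
  "level_inner \<phi> \<psi> n = (\<Sum>w\<in>words q n. \<phi> n w * cnj (\<psi> n w)) / of_real (Q ^ n)"

lemma Hinner_eq_suminf: "Hinner p f \<phi> \<psi> = (\<Sum>n. level_inner \<phi> \<psi> n)"
proof -
  have "of_nat (p ^ (n * f)) = (of_real (Q ^ n) :: complex)" for n
    by (simp add: power_mult mult.commute)
  then show ?thesis by (simp add: Hinner_def level_inner_def)
qed

lemma norm_level_inner_le:
  assumes t: "t > 0"
  shows "cmod (level_inner \<phi> \<psi> n) \<le> (t * L \<phi> n + L \<psi> n / t) / 2"
proof -
  define A where "A = (\<Sum>w\<in>words q n. (cmod (\<phi> n w))\<^sup>2)"
  define B where "B = (\<Sum>w\<in>words q n. (cmod (\<psi> n w))\<^sup>2)"
  have "cmod (\<Sum>w\<in>words q n. \<phi> n w * cnj (\<psi> n w)) \<le>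
        (\<Sum>w\<in>words q n. (t * (cmod (\<phi> n w))\<^sup>2 + (cmod (\<psi> n w))\<^sup>2 / t) / 2)"
    by (rule order_trans[OF norm_sum sum_mono[OF norm_mult_cnj_le[OF t]]])
  also have "\<dots> = (t * A + B / t) / 2"
    by (simp add: A_def B_def sum.distrib sum_distrib_left add_divide_distrib
        flip: sum_divide_distrib)
  finally have num: "cmod (\<Sum>w\<in>words q n. \<phi> n w * cnj (\<psi> n w)) \<le> (t * A + B / t) / 2" .
  have "cmod (level_inner \<phi> \<psi> n) = cmod (\<Sum>w\<in>words q n. \<phi> n w * cnj (\<psi> n w)) / Q ^ n"
    by (simp only: level_inner_def norm_divide norm_of_real abs_of_pos[OF Q_power_pos])
  also have "\<dots> \<le> ((t * A + B / t) / 2) / Q ^ n"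
    by (rule divide_right_mono[OF num]) (use Q_power_pos in \<open>simp add: less_imp_le\<close>)
  also have "\<dots> = (t * (A / Q ^ n) + (B / Q ^ n) / t) / 2"
    using t Q_power_pos[of n] by (simp add: field_split_simps)
  finally show ?thesis by (simp add: level_sq_eq A_def B_def)
qed

lemma summable_norm_level_inner:
  assumes "\<phi> \<in> H" "\<psi> \<in> H"
  shows "summable (\<lambda>n. cmod (level_inner \<phi> \<psi> n))"
proof (rule summable_comparison_test)
  show "\<exists>N. \<forall>n\<ge>N. norm (cmod (level_inner \<phi> \<psi> n)) \<le> L \<phi> n + L \<psi> n"
  proof (intro exI[of _ 0] allI impI)
    fix n
    show "norm (cmod (level_inner \<phi> \<psi> n)) \<le> L \<phi> n + L \<psi> n"
      using norm_level_inner_le[of 1 \<phi> \<psi> n] level_sq_nonneg[of \<phi> n] level_sq_nonneg[of \<psi> n]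
      by simp
  qed
  show "summable (\<lambda>n. L \<phi> n + L \<psi> n)"
    using assms by (intro summable_add summable_level_sq)
qed

lemma summable_level_inner: "\<phi> \<in> H \<Longrightarrow> \<psi> \<in> H \<Longrightarrow> summable (level_inner \<phi> \<psi>)"
  using summable_norm_level_inner summable_norm_cancel by blast

lemma norm_Hinner_le:
  assumes "\<phi> \<in> H" "\<psi> \<in> H"
  shows "cmod (Hinner p f \<phi> \<psi>) \<le> Hnorm p f \<phi> * Hnorm p f \<psi>"
  unfolding Hnorm_eq_sqrt
proof (rule le_sqrt_mult_if_le_means[OF sqnorm_nonneg[OF assms(1)] sqnorm_nonneg[OF assms(2)]])
  fix t :: real assume t: "t > 0"
  have sums: "(\<lambda>n. (t * L \<phi> n + L \<psi> n / t) / 2) sums ((t * sqnorm \<phi> + sqnorm \<psi> / t) / 2)"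
    unfolding sqnorm_def using assms
    by (intro sums_divide sums_add sums_mult summable_sums summable_level_sq)
  have "cmod (Hinner p f \<phi> \<psi>) \<le> (\<Sum>n. cmod (level_inner \<phi> \<psi> n))"
    unfolding Hinner_eq_suminf by (rule summable_norm[OF summable_norm_level_inner[OF assms]])
  also have "\<dots> \<le> (t * sqnorm \<phi> + sqnorm \<psi> / t) / 2"
    using suminf_le[OF norm_level_inner_le[OF t] summable_norm_level_inner[OF assms]
        sums_summable[OF sums]] sums_unique[OF sums] by simp
  finally show "cmod (Hinner p f \<phi> \<psi>) \<le> (t * sqnorm \<phi> + sqnorm \<psi> / t) / 2" .
qed

lemma Hinner_add_left:
  assumes "\<phi> \<in> H" "\<eta> \<in> H" "\<psi> \<in> H"
  shows "Hinner p f (\<lambda>n w. \<phi> n w + \<eta> n w) \<psi> = Hinner p f \<phi> \<psi> + Hinner p f \<eta> \<psi>"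
proof -
  have "level_inner (\<lambda>n w. \<phi> n w + \<eta> n w) \<psi> = (\<lambda>n. level_inner \<phi> \<psi> n + level_inner \<eta> \<psi> n)"
    by (simp add: fun_eq_iff level_inner_def distrib_right sum.distrib add_divide_distrib)
  then show ?thesis
    unfolding Hinner_eq_suminf using assms by (simp add: suminf_add summable_level_inner)
qed

lemma Hinner_scale_left:
  assumes "\<phi> \<in> H" "\<psi> \<in> H"
  shows "Hinner p f (\<lambda>n w. c * \<phi> n w) \<psi> = c * Hinner p f \<phi> \<psi>"
proof -
  have "level_inner (\<lambda>n w. c * \<phi> n w) \<psi> = (\<lambda>n. c * level_inner \<phi> \<psi> n)"
    by (simp add: fun_eq_iff level_inner_def sum_distrib_left mult.assoc)
  then show ?thesis
    unfolding Hinner_eq_suminf using assms by (simp add: suminf_mult summable_level_inner)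
qed

lemma Hinner_diff_left:
  assumes "\<phi> \<in> H" "\<eta> \<in> H" "\<psi> \<in> H"
  shows "Hinner p f (\<phi> - \<eta>) \<psi> = Hinner p f \<phi> \<psi> - Hinner p f \<eta> \<psi>"
  using Hinner_add_left[OF assms(1) scale_in_H[OF assms(2)] assms(3), of "- 1"]
    Hinner_scale_left[OF assms(2,3), of "- 1"]
  by (simp add: fun_diff_def)

lemma Hinner_sum_left:
  assumes "finite F" "F \<subseteq> H" "\<psi> \<in> H"
  shows "Hinner p f (\<lambda>n w. \<Sum>b\<in>F. c b * b n w) \<psi> = (\<Sum>b\<in>F. c b * Hinner p f b \<psi>)"
  using assms(1,2)
proof (induction F rule: finite_induct)
  case empty
  then show ?case by (simp add: Hinner_eq_suminf level_inner_def)
next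
  case (insert x F)
  then show ?case
    using assms(3) by (simp add: Hinner_add_left Hinner_scale_left scale_in_H sum_in_H)
qed

lemma Hinner_commute:
  assumes "\<phi> \<in> H" "\<psi> \<in> H"
  shows "Hinner p f \<psi> \<phi> = cnj (Hinner p f \<phi> \<psi>)"
proof -
  have "level_inner \<psi> \<phi> = (\<lambda>n. cnj (level_inner \<phi> \<psi> n))"
    by (simp add: fun_eq_iff level_inner_def mult.commute)
  then show ?thesis
    unfolding Hinner_eq_suminf using summable_level_inner[OF assms]
    by (simp add: sums_unique[symmetric] sums_cnj summable_sums)
qed

lemma Hinner_self: "\<phi> \<in> H \<Longrightarrow> Hinner p f \<phi> \<phi> = of_real (sqnorm \<phi>)"
proof -
  assume "\<phi> \<in> H"
  have "\<phi> n w * cnj (\<phi> n w) = of_real ((cmod (\<phi> n w))\<^sup>2)" for n w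
    by (rule complex_norm_square[symmetric])
  then have "level_inner \<phi> \<phi> = (\<lambda>n. of_real (L \<phi> n))"
    by (simp add: fun_eq_iff level_inner_def level_sq_eq)
  then show ?thesis
    unfolding Hinner_eq_suminf sqnorm_def
    using \<open>\<phi> \<in> H\<close> by (simp add: suminf_of_real summable_level_sq)
qed

lemma Hinner_tendsto_left:
  assumes "\<And>k. x k \<in> H" "g \<in> H" "b \<in> H" and "(\<lambda>k. sqnorm (x k - g)) \<longlonglongrightarrow> 0"
  shows "(\<lambda>k. Hinner p f (x k) b) \<longlonglongrightarrow> Hinner p f g b"
proof -
  have "(\<lambda>k. Hinner p f (x k - g) b) \<longlonglongrightarrow> 0"
  proof (rule Lim_null_comparison)
    show "\<forall>\<^sub>F k in sequentially. norm (Hinner p f (x k - g) b) \<le> sqrt (sqnorm (x k - g)) * Hnorm p f b"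
      using assms by (simp add: norm_Hinner_le diff_in_H flip: Hnorm_eq_sqrt)
    have "(\<lambda>k. sqrt (sqnorm (x k - g))) \<longlonglongrightarrow> 0"
      using tendsto_real_sqrt[OF assms(4)] by simp
    then show "(\<lambda>k. sqrt (sqnorm (x k - g)) * Hnorm p f b) \<longlonglongrightarrow> 0"
      by (rule tendsto_mult_left_zero)
  qed
  then show ?thesis
    using assms by (simp add: Hinner_diff_left LIM_zero_iff)
qed

lemma level_sq_tendsto:
  assumes "\<And>w. (\<lambda>k. x k n w) \<longlonglongrightarrow> z n w"
  shows "(\<lambda>k. L (x k) n) \<longlonglongrightarrow> L z n"
  unfolding level_sq_eq using two_le_p
  by (intro tendsto_divide tendsto_sum tendsto_power tendsto_norm assms tendsto_const) auto

lemma sqnorm_le_if_pointwise_limit: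
  assumes "\<And>n w. (\<lambda>k. x k n w) \<longlonglongrightarrow> z n w" "\<And>k. x k \<in> H"
    and "\<forall>\<^sub>F k in sequentially. sqnorm (x k) \<le> C"
  shows "summable (L z)" "sqnorm z \<le> C"
proof -
  have "(\<Sum>n<N. L z n) \<le> C" for N
  proof (rule tendsto_upperbound)
    show "(\<lambda>k. \<Sum>n<N. L (x k) n) \<longlonglongrightarrow> (\<Sum>n<N. L z n)"
      by (intro tendsto_sum level_sq_tendsto assms)
    show "\<forall>\<^sub>F k in sequentially. (\<Sum>n<N. L (x k) n) \<le> C"
      using assms(3)
    proof (rule eventually_mono)
      fix k assume "sqnorm (x k) \<le> C"
      then show "(\<Sum>n<N. L (x k) n) \<le> C"
        using sum_level_sq_le_sqnorm[OF assms(2)[of k], of "{..<N}"] by simp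
    qed
  qed simp
  then show "summable (L z)" "sqnorm z \<le> C" by (rule sqnorm_le_if_partial_sums_le)+
qed

lemma Cauchy_coordinate:
  assumes xH: "\<And>k. x k \<in> H"
    and Cauchy: "\<And>\<epsilon>. \<epsilon> > 0 \<Longrightarrow> \<exists>K. \<forall>k\<ge>K. \<forall>m\<ge>K. sqnorm (x k - x m) \<le> \<epsilon>"
  shows "Cauchy (\<lambda>k. x k n w)"
proof (rule metric_CauchyI)
  fix \<epsilon> :: real assume "\<epsilon> > 0"
  then obtain K where K: "\<forall>k\<ge>K. \<forall>m\<ge>K. sqnorm (x k - x m) \<le> \<epsilon>\<^sup>2 / (2 * Q ^ n)"
    using Cauchy[of "\<epsilon>\<^sup>2 / (2 * Q ^ n)"] Q_power_pos[of n] by auto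
  have "dist (x k n w) (x m n w) < \<epsilon>" if "k \<ge> K" "m \<ge> K" for k m
  proof -
    have "(cmod (x k n w - x m n w))\<^sup>2 \<le> Q ^ n * sqnorm (x k - x m)"
      using norm_coord_squared_le_sqnorm[OF diff_in_H[OF xH xH]] by simp
    also have "\<dots> \<le> Q ^ n * (\<epsilon>\<^sup>2 / (2 * Q ^ n))"
      using K that Q_power_pos[of n] by (intro mult_left_mono) auto
    also have "\<dots> < \<epsilon>\<^sup>2"
      using \<open>\<epsilon> > 0\<close> Q_power_pos[of n] by simp
    finally show ?thesis using \<open>\<epsilon> > 0\<close> by (simp add: dist_norm power_less_imp_less_base)
  qed
  then show "\<exists>K. \<forall>k\<ge>K. \<forall>m\<ge>K. dist (x k n w) (x m n w) < \<epsilon>" by blast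
qed

lemma H_complete:
  assumes xH: "\<And>k. x k \<in> H"
    and Cauchy: "\<And>\<epsilon>. \<epsilon> > 0 \<Longrightarrow> \<exists>K. \<forall>k\<ge>K. \<forall>m\<ge>K. sqnorm (x k - x m) \<le> \<epsilon>"
  shows "\<exists>g\<in>H. (\<forall>n w. (\<lambda>k. x k n w) \<longlonglongrightarrow> g n w) \<and> (\<lambda>k. sqnorm (x k - g)) \<longlonglongrightarrow> 0"
proof -
  have "Cauchy (\<lambda>k. x k n w)" for n w
    using Cauchy_coordinate[OF xH Cauchy] .
  then obtain g where conv: "\<And>n w. (\<lambda>k. x k n w) \<longlonglongrightarrow> g n w"
    unfolding Cauchy_convergent_iff convergent_def by metis
  have close: "x k - g \<in> H \<and> sqnorm (x k - g) \<le> \<epsilon>"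
    if K: "\<forall>k\<ge>K. \<forall>m\<ge>K. sqnorm (x k - x m) \<le> \<epsilon>" and "k \<ge> K" for k K \<epsilon>
  proof -
    have diff_conv: "(\<lambda>m. (x k - x m) n w) \<longlonglongrightarrow> (x k - g) n w" for n w
      by (simp add: tendsto_diff conv)
    have "\<forall>\<^sub>F m in sequentially. sqnorm (x k - x m) \<le> \<epsilon>"
      using K \<open>k \<ge> K\<close> by (auto simp: eventually_sequentially)
    note limit = sqnorm_le_if_pointwise_limit[where x = "\<lambda>m. x k - x m" and z = "x k - g",
        OF diff_conv diff_in_H[OF xH xH] this]
    have "(x k - g) n w = 0" if "w \<notin> words q n" for n w
    proof -
      have "(\<lambda>m. x m n w) \<longlonglongrightarrow> 0" using H_vanish[OF xH that] by simp
      then have "g n w = 0" using LIMSEQ_unique[OF conv] by blast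
      then show ?thesis using H_vanish[OF xH that] by simp
    qed
    then show ?thesis using limit by (simp add: in_H_iff)
  qed
  obtain K where "\<forall>k\<ge>K. \<forall>m\<ge>K. sqnorm (x k - x m) \<le> 1" using Cauchy[of 1] by auto
  then have "x K - (x K - g) \<in> H" using close[of K] by (simp add: diff_in_H xH)
  moreover have "x K - (x K - g) = g" by (simp add: fun_eq_iff)
  ultimately have gH: "g \<in> H" by simp
  have "(\<lambda>k. sqnorm (x k - g)) \<longlonglongrightarrow> 0"
  proof (rule LIMSEQ_I)
    fix \<epsilon> :: real assume "\<epsilon> > 0"
    then obtain K where "\<forall>k\<ge>K. \<forall>m\<ge>K. sqnorm (x k - x m) \<le> \<epsilon> / 2" using Cauchy[of "\<epsilon> / 2"] by auto
    then have "\<forall>k\<ge>K. norm (sqnorm (x k - g) - 0) < \<epsilon>"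
      using close[of K] sqnorm_nonneg \<open>\<epsilon> > 0\<close> by fastforce
    then show "\<exists>K. \<forall>k\<ge>K. norm (sqnorm (x k - g) - 0) < \<epsilon>" ..
  qed
  then show ?thesis using gH conv by blast
qed

definition orthonormal :: "tvec set \<Rightarrow> bool" where
  "orthonormal B \<longleftrightarrow> B \<subseteq> H \<and> (\<forall>b\<in>B. \<forall>c\<in>B. Hinner p f b c = (if b = c then 1 else 0))"

lemma orthonormal_if_basis: "orthonormal_basis p f B \<Longrightarrow> orthonormal B"
  unfolding orthonormal_basis_def orthonormal_def
  by (auto simp: Hinner_self simp flip: Hnorm_squared)

lemma Hinner_orthonormal_combination:
  assumes B: "orthonormal B" and F: "finite F" "F \<subseteq> B" and "b \<in> B"
  shows "Hinner p f (\<lambda>n w. \<Sum>b'\<in>F. c b' * b' n w) b = (if b \<in> F then c b else 0)"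
proof -
  have "Hinner p f (\<lambda>n w. \<Sum>b'\<in>F. c b' * b' n w) b = (\<Sum>b'\<in>F. c b' * Hinner p f b' b)"
    using assms by (intro Hinner_sum_left) (auto simp: orthonormal_def)
  also have "\<dots> = (\<Sum>b'\<in>F. if b' = b then c b else 0)"
    using assms by (intro sum.cong refl) (auto simp: orthonormal_def)
  finally show ?thesis using F by simp
qed

lemma sqnorm_orthonormal_combination:
  assumes B: "orthonormal B" and F: "finite F" "F \<subseteq> B"
  shows "sqnorm (\<lambda>n w. \<Sum>b\<in>F. c b * b n w) = (\<Sum>b\<in>F. (cmod (c b))\<^sup>2)"
proof -
  define x where "x = (\<lambda>n w. \<Sum>b\<in>F. c b * b n w)"
  have FH: "F \<subseteq> H" using B F by (auto simp: orthonormal_def)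
  then have xH: "x \<in> H" unfolding x_def using F by (intro sum_in_H)
  have "of_real (sqnorm x) = Hinner p f x x" by (simp add: Hinner_self xH)
  also have "\<dots> = (\<Sum>b\<in>F. c b * Hinner p f b x)"
    using Hinner_sum_left[OF F(1) FH xH, of c] by (simp add: x_def)
  also have "\<dots> = (\<Sum>b\<in>F. c b * cnj (c b))"
  proof (intro sum.cong refl)
    fix b assume "b \<in> F"
    then have "Hinner p f x b = c b"
      using Hinner_orthonormal_combination[OF B F, of b c] F by (auto simp: x_def)
    then show "c b * Hinner p f b x = c b * cnj (c b)"
      using FH \<open>b \<in> F\<close> xH by (auto simp: Hinner_commute[of x b])
  qed
  also have "\<dots> = of_real (\<Sum>b\<in>F. (cmod (c b))\<^sup>2)"
    by (simp only: of_real_sum complex_norm_square)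
  finally show ?thesis unfolding x_def of_real_eq_iff .
qed

lemma orthonormal_partial_sums_converge:
  assumes B: "orthonormal B" and F: "\<And>N. finite (F N)" "\<And>N. F N \<subseteq> B" "incseq F"
    and bound: "\<And>N. (\<Sum>b\<in>F N. (cmod (c b))\<^sup>2) \<le> I"
  defines "g N \<equiv> (\<lambda>n w. \<Sum>b\<in>F N. c b * b n w)"
  shows "\<exists>G\<in>H. (\<forall>n w. (\<lambda>N. g N n w) \<longlonglongrightarrow> G n w) \<and> (\<lambda>N. sqnorm (g N - G)) \<longlonglongrightarrow> 0"
proof (rule H_complete)
  show gH: "g N \<in> H" for N
    using B F unfolding g_def orthonormal_def by (intro sum_in_H) auto
  define s where "s N = (\<Sum>b\<in>F N. (cmod (c b))\<^sup>2)" for N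
  have "s m \<le> s n" if "m \<le> n" for m n
    unfolding s_def using F(1) monoD[OF F(3) that] by (intro sum_mono2) auto
  then have "incseq s" by (simp add: incseq_def)
  moreover have "bdd_above (range s)"
    using bound by (auto simp: s_def intro!: bdd_aboveI[of _ I])
  ultimately have "Cauchy s"
    using LIMSEQ_incseq_SUP LIMSEQ_imp_Cauchy by blast
  have diff: "sqnorm (g M - g N) = \<bar>s M - s N\<bar>" for M N
  proof -
    have *: "sqnorm (g M - g N) = s M - s N" if "N \<le> M" for M N
    proof -
      have "F N \<subseteq> F M" using F(3) that by (simp add: incseq_def)
      then have "g M - g N = (\<lambda>n w. \<Sum>b\<in>F M - F N. c b * b n w)"
        unfolding g_def using F by (auto simp: fun_eq_iff sum_diff)
      then show ?thesis
        using sqnorm_orthonormal_combination[OF B, of "F M - F N" c] \<open>F N \<subseteq> F M\<close> F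
        by (auto simp: s_def sum_diff)
    qed
    have "s N \<le> s M" if "N \<le> M" for M N
      using \<open>incseq s\<close> that by (simp add: incseq_def)
    then show ?thesis
      using *[of N M] *[of M N] by (cases "N \<le> M") (auto simp: level_sq_commute sqnorm_def)
  qed
  fix \<epsilon> :: real assume "\<epsilon> > 0"
  then obtain K where "\<forall>M\<ge>K. \<forall>N\<ge>K. dist (s M) (s N) < \<epsilon>"
    using \<open>Cauchy s\<close> by (auto simp: Cauchy_def)
  then show "\<exists>K. \<forall>M\<ge>K. \<forall>N\<ge>K. sqnorm (g M - g N) \<le> \<epsilon>"
    unfolding diff dist_real_def by (meson less_imp_le)
qed

lemma orthonormal_expansion_along:
  assumes B: "orthonormal B" and F: "\<And>N. finite (F N)" "\<And>N. F N \<subseteq> B" "incseq F"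
    and bound: "\<And>N. (\<Sum>b\<in>F N. (cmod (c b))\<^sup>2) \<le> I"
    and exhaust: "\<And>b. b \<in> B \<Longrightarrow> c b \<noteq> 0 \<Longrightarrow> \<exists>N. b \<in> F N"
  shows "\<exists>G\<in>H. (\<forall>b\<in>B. Hinner p f G b = c b) \<and> sqnorm G \<le> I"
proof -
  define g where "g N = (\<lambda>n w. \<Sum>b\<in>F N. c b * b n w)" for N
  have gH: "g N \<in> H" for N
    using B F unfolding g_def orthonormal_def by (intro sum_in_H) auto
  obtain G where GH: "G \<in> H" and pointwise: "\<forall>n w. (\<lambda>N. g N n w) \<longlonglongrightarrow> G n w"
    and lim: "(\<lambda>N. sqnorm (g N - G)) \<longlonglongrightarrow> 0"
    using orthonormal_partial_sums_converge[OF B F bound] unfolding g_def by blast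
  have "Hinner p f G b = c b" if b: "b \<in> B" for b
  proof -
    have coeff: "Hinner p f (g N) b = (if b \<in> F N then c b else 0)" for N
      unfolding g_def by (rule Hinner_orthonormal_combination[OF B F(1,2) b])
    have "\<forall>\<^sub>F N in sequentially. Hinner p f (g N) b = c b"
    proof (cases "c b = 0")
      case False
      then obtain N0 where "b \<in> F N0" using exhaust[OF b] by blast
      then have "b \<in> F N" if "N \<ge> N0" for N using monoD[OF F(3) that] by blast
      then show ?thesis by (auto simp: coeff eventually_sequentially)
    qed (simp add: coeff)
    then have "(\<lambda>N. Hinner p f (g N) b) \<longlonglongrightarrow> c b" by (rule tendsto_eventually)
    moreover have "(\<lambda>N. Hinner p f (g N) b) \<longlonglongrightarrow> Hinner p f G b"
      using b B by (intro Hinner_tendsto_left gH GH lim) (auto simp: orthonormal_def)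
    ultimately show ?thesis using LIMSEQ_unique by blast
  qed
  moreover have "sqnorm G \<le> I"
  proof (rule sqnorm_le_if_pointwise_limit(2))
    show "\<forall>\<^sub>F N in sequentially. sqnorm (g N) \<le> I"
      using bound by (simp add: g_def sqnorm_orthonormal_combination[OF B F(1,2)])
  qed (use pointwise gH in auto)
  ultimately show ?thesis using GH by blast
qed

lemma orthonormal_expansion:
  assumes B: "orthonormal B" and sm: "(\<lambda>b. (cmod (c b))\<^sup>2) summable_on B"
  shows "\<exists>G\<in>H. (\<forall>b\<in>B. Hinner p f G b = c b) \<and> sqnorm G \<le> (\<Sum>\<^sub>\<infinity>b\<in>B. (cmod (c b))\<^sup>2)"
proof -
  define S where "S = {b\<in>B. c b \<noteq> 0}"
  have "countable S" using summable_countable_real[OF sm] by (simp add: S_def)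
  define F where "F N = S \<inter> from_nat_into S ` {..<N}" for N
  show ?thesis
  proof (rule orthonormal_expansion_along[OF B])
    show "finite (F N)" "F N \<subseteq> B" for N by (auto simp: F_def S_def)
    show "incseq F" by (auto simp: incseq_def F_def)
    show "(\<Sum>b\<in>F N. (cmod (c b))\<^sup>2) \<le> (\<Sum>\<^sub>\<infinity>b\<in>B. (cmod (c b))\<^sup>2)" for N
      by (intro finite_sum_le_infsum sm) (auto simp: F_def S_def)
    fix b assume "b \<in> B" "c b \<noteq> 0"
    then have "b \<in> S" by (simp add: S_def)
    then obtain k where "from_nat_into S k = b"
      using from_nat_into_surj[OF \<open>countable S\<close>] by blast
    then show "\<exists>N. b \<in> F N" using \<open>b \<in> S\<close> by (auto simp: F_def intro!: exI[of _ "Suc k"])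
  qed
qed

lemma sqnorm_le_infsum_Hinner:
  assumes B: "orthonormal_basis p f B" and "h \<in> H"
    and "(\<lambda>b. (cmod (Hinner p f h b))\<^sup>2) summable_on B"
  shows "sqnorm h \<le> (\<Sum>\<^sub>\<infinity>b\<in>B. (cmod (Hinner p f h b))\<^sup>2)"
proof -
  obtain G where "G \<in> H" and coeffs: "\<forall>b\<in>B. Hinner p f G b = Hinner p f h b"
    and le: "sqnorm G \<le> (\<Sum>\<^sub>\<infinity>b\<in>B. (cmod (Hinner p f h b))\<^sup>2)"
    using orthonormal_expansion[OF orthonormal_if_basis[OF B] assms(3)] by blast
  have "\<forall>b\<in>B. Hinner p f (h - G) b = 0"
    using B \<open>h \<in> H\<close> \<open>G \<in> H\<close> coeffs by (auto simp: orthonormal_basis_def Hinner_diff_left)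
  then have "h - G = (\<lambda>n w. 0)"
    using B \<open>h \<in> H\<close> \<open>G \<in> H\<close> by (simp add: orthonormal_basis_def diff_in_H)
  then have "(h - G) n w = 0" for n w by simp
  then have "h n w = G n w" for n w by (simp add: fun_diff_def)
  then have "h = G" by (simp add: fun_eq_iff)
  then show ?thesis using le by simp
qed

lemma level_sq_le_Suc_if_mean_of_children:
  assumes mean: "\<And>w. w \<in> words q n \<Longrightarrow> \<phi> n w = (\<Sum>s<q. \<phi> (Suc n) (w @ [s])) / of_real Q"
  shows "L \<phi> n \<le> L \<phi> (Suc n)"
proof -
  have "(cmod (\<phi> n w))\<^sup>2 \<le> (\<Sum>s<q. (cmod (\<phi> (Suc n) (w @ [s])))\<^sup>2) / Q" if "w \<in> words q n" for w
  proof -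
    have "(cmod (\<phi> n w))\<^sup>2 = (cmod (\<Sum>s<q. \<phi> (Suc n) (w @ [s])))\<^sup>2 / Q\<^sup>2"
      by (simp only: mean[OF that] norm_divide norm_of_real abs_of_pos[OF Q_pos] power_divide)
    also have "\<dots> \<le> (Q * (\<Sum>s<q. (cmod (\<phi> (Suc n) (w @ [s])))\<^sup>2)) / Q\<^sup>2"
      using norm_sum_squared_le_card[of "\<lambda>s. \<phi> (Suc n) (w @ [s])" "{..<q}"]
      by (intro divide_right_mono) auto
    also have "\<dots> = (\<Sum>s<q. (cmod (\<phi> (Suc n) (w @ [s])))\<^sup>2) / Q"
      using Q_pos by (simp add: power2_eq_square)
    finally show ?thesis .
  qed
  then have "(\<Sum>w\<in>words q n. (cmod (\<phi> n w))\<^sup>2) \<le>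
             (\<Sum>w\<in>words q n. (\<Sum>s<q. (cmod (\<phi> (Suc n) (w @ [s])))\<^sup>2) / Q)"
    by (intro sum_mono)
  also have "\<dots> = (\<Sum>v\<in>words q (Suc n). (cmod (\<phi> (Suc n) v))\<^sup>2) / Q"
    by (simp add: sum_words_snoc sum_divide_distrib)
  finally show ?thesis
    using Q_power_pos[of n] Q_pos by (simp add: level_sq_eq field_simps divide_right_mono)
qed

lemma sqnorm_tendsto_0_if_dominated:
  assumes "\<And>n w. (\<lambda>k. x k n w) \<longlonglongrightarrow> 0" "\<And>k n. L (x k) n \<le> c n" "summable c"
  shows "(\<lambda>k. sqnorm (x k)) \<longlonglongrightarrow> 0"
proof -
  have lim: "(\<lambda>k. L (x k) n) \<longlonglongrightarrow> 0" for n
    using level_sq_tendsto[of x n "\<lambda>n w. 0"] assms(1) by simp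
  have bound: "\<forall>\<^sub>F (n, k) in at_top \<times>\<^sub>F sequentially. norm (L (x k) n) \<le> c n"
    using assms(2) level_sq_nonneg by (intro always_eventually) auto
  have "(\<lambda>k. \<Sum>n. L (x k) n) \<longlonglongrightarrow> (\<Sum>n. 0::real)"
    using tannerys_theorem[where a = "\<lambda>n k. L (x k) n" and b = "\<lambda>n. 0" and F = sequentially,
        OF lim bound assms(3)] by simp
  then show ?thesis by (simp add: sqnorm_def)
qed

text \<open>The coordinates are bounded, so a diagonal subsequence converges pointwise; the
  domination upgrades pointwise convergence to norm convergence.\<close>
lemma convergent_subseq_if_level_dominated:
  fixes x :: "nat \<Rightarrow> tvec"
  assumes xH: "\<And>k. x k \<in> H" and dom: "\<And>k n. L (x k) n \<le> c n" and "summable c"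
  shows "\<exists>R \<phi>. strict_mono R \<and> \<phi> \<in> H \<and> (\<lambda>k. sqnorm (x (R k) - \<phi>)) \<longlonglongrightarrow> 0"
proof -
  have "bounded (range (\<lambda>k. x k (fst i) (snd i)))" for i
  proof (cases "snd i \<in> words q (fst i)")
    case True
    have "(cmod (x k (fst i) (snd i)))\<^sup>2 \<le> Q ^ fst i * c (fst i)" for k
      using norm_coord_squared_le_level[OF True, of "x k"] dom[of k "fst i"] Q_power_pos[of "fst i"]
      by (meson mult_left_mono order_trans less_imp_le)
    then show ?thesis
      unfolding bounded_iff by (auto intro!: exI[of _ "sqrt (Q ^ fst i * c (fst i))"] real_le_rsqrt)
  qed (simp add: H_vanish[OF xH])
  then obtain R where "strict_mono R" and conv: "\<And>i. convergent (\<lambda>k. x (R k) (fst i) (snd i))"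
    using pointwise_convergent_subseq[of "\<lambda>k i. x k (fst i) (snd i)"] by blast
  define \<phi> where "\<phi> n w = lim (\<lambda>k. x (R k) n w)" for n w
  have pointwise: "(\<lambda>k. x (R k) n w) \<longlonglongrightarrow> \<phi> n w" for n w
    using conv[of "(n, w)"] by (simp add: \<phi>_def convergent_LIMSEQ_iff)
  have \<phi>_dom: "L \<phi> n \<le> c n" for n
    by (rule tendsto_upperbound[OF level_sq_tendsto[OF pointwise]]) (simp_all add: dom)
  have "\<phi> n w = 0" if "w \<notin> words q n" for n w
    using pointwise[of n w] H_vanish[OF xH that] by (simp add: LIMSEQ_const_iff)
  moreover have "summable (L \<phi>)"
    by (rule summable_comparison_test[OF _ \<open>summable c\<close>]) (simp add: level_sq_nonneg \<phi>_dom)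
  ultimately have "\<phi> \<in> H" by (simp add: in_H_iff)
  moreover have "(\<lambda>k. sqnorm (x (R k) - \<phi>)) \<longlonglongrightarrow> 0"
  proof (rule sqnorm_tendsto_0_if_dominated)
    show "(\<lambda>k. (x (R k) - \<phi>) n w) \<longlonglongrightarrow> 0" for n w
      using pointwise[of n w] by (simp add: LIM_zero)
    show "L (x (R k) - \<phi>) n \<le> 4 * c n" for k n
      using level_sq_diff_le[of "x (R k)" \<phi> n] dom[of "R k" n] \<phi>_dom[of n] by simp
  qed (use \<open>summable c\<close> in simp)
  ultimately show ?thesis using \<open>strict_mono R\<close> by blast
qed

definition unit_vec :: "nat \<Rightarrow> nat list \<Rightarrow> tvec" where
  "unit_vec k w = (\<lambda>n v. if n = k \<and> v = w then of_real (sqrt (Q ^ k)) else 0)"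

lemma Hinner_unit_vec:
  assumes "w \<in> words q k"
  shows "Hinner p f \<phi> (unit_vec k w) = \<phi> k w / of_real (sqrt (Q ^ k))"
proof -
  define c :: complex where "c = of_real (sqrt (Q ^ k))"
  have "c \<noteq> 0" using Q_power_pos[of k] by (simp add: c_def)
  have "(of_real (Q ^ k) :: complex) = c * c"
    using Q_power_pos[of k] by (simp add: c_def flip: of_real_mult)
  moreover have "(\<Sum>v\<in>words q k. \<phi> k v * cnj (unit_vec k w k v)) = \<phi> k w * c"
    using assms by (simp add: unit_vec_def c_def if_distrib cong: if_cong)
  ultimately have "level_inner \<phi> (unit_vec k w) n = (if n = k then \<phi> k w / c else 0)" for n
    using \<open>c \<noteq> 0\<close> by (auto simp: level_inner_def unit_vec_def)
  then have "level_inner \<phi> (unit_vec k w) = (\<lambda>n. if n = k then \<phi> k w / c else 0)"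
    by (simp add: fun_eq_iff)
  then show ?thesis
    unfolding Hinner_eq_suminf using sums_single[of k "\<lambda>_. \<phi> k w / c"]
    by (simp add: sums_iff c_def)
qed

lemma level_sq_unit_vec:
  assumes "w \<in> words q k"
  shows "L (unit_vec k w) n = (if n = k then 1 else 0)"
proof -
  have "(cmod (unit_vec k w n v))\<^sup>2 = (if n = k \<and> v = w then Q ^ k else 0)" for v
    using Q_power_pos[of k] by (simp add: unit_vec_def)
  then have "(\<Sum>v\<in>words q n. (cmod (unit_vec k w n v))\<^sup>2) = (if n = k then Q ^ k else 0)"
    using assms by (simp add: sum.delta')
  then show ?thesis using Q_power_pos[of k] by (simp add: level_sq_eq)
qed

lemma unit_vec_in_H:
  assumes "w \<in> words q k"
  shows "unit_vec k w \<in> H"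
proof -
  have "L (unit_vec k w) = (\<lambda>n. if n = k then 1 else 0)"
    using assms by (simp add: fun_eq_iff level_sq_unit_vec)
  then show ?thesis using assms by (auto simp: in_H_iff unit_vec_def)
qed

lemma sqnorm_unit_vec: "w \<in> words q k \<Longrightarrow> sqnorm (unit_vec k w) = 1"
  using sums_single[of k "\<lambda>_. 1::real"] by (simp add: sqnorm_def level_sq_unit_vec sums_iff)

definition vertices :: "(nat \<times> nat list) set" where
  "vertices = Sigma UNIV (words q)"

definition standard_basis :: "tvec set" where
  "standard_basis = (\<lambda>(k, w). unit_vec k w) ` vertices"

lemma inj_on_unit_vec: "inj_on (\<lambda>(k, w). unit_vec k w) vertices"
proof (rule inj_onI, clarify)
  fix k w k' w' assume "unit_vec k w = unit_vec k' w'"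
  then have "unit_vec k w k w = unit_vec k' w' k w" by simp
  then show "k = k' \<and> w = w'"
    using Q_power_pos[of k] by (auto simp: unit_vec_def split: if_splits)
qed

lemma orthonormal_basis_standard_basis: "orthonormal_basis p f standard_basis"
  unfolding orthonormal_basis_def
proof (intro conjI ballI impI)
  show "standard_basis \<subseteq> H"
    by (auto simp: standard_basis_def vertices_def unit_vec_in_H)
  fix b assume "b \<in> standard_basis"
  then obtain k w where b: "b = unit_vec k w" and w: "w \<in> words q k"
    by (auto simp: standard_basis_def vertices_def)
  show "Hnorm p f b = 1" by (simp add: b Hnorm_eq_sqrt sqnorm_unit_vec[OF w])
  fix c assume "c \<in> standard_basis" "b \<noteq> c"
  then obtain k' w' where c: "c = unit_vec k' w'" and w': "w' \<in> words q k'"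
    by (auto simp: standard_basis_def vertices_def)
  have "(k, w) \<noteq> (k', w')" using \<open>b \<noteq> c\<close> b c by auto
  then show "Hinner p f b c = 0"
    unfolding b c Hinner_unit_vec[OF w'] by (auto simp: unit_vec_def)
next
  fix \<phi> assume "\<phi> \<in> H" and orth: "\<forall>b\<in>standard_basis. Hinner p f \<phi> b = 0"
  have "\<phi> n w = 0" for n w
  proof (cases "w \<in> words q n")
    case True
    then have "unit_vec n w \<in> standard_basis" by (auto simp: standard_basis_def vertices_def)
    then show ?thesis using orth Q_power_pos[of n] by (auto simp: Hinner_unit_vec[OF True])
  qed (rule H_vanish[OF \<open>\<phi> \<in> H\<close>])
  then show "\<phi> = (\<lambda>n w. 0)" by (simp add: fun_eq_iff)
qed

end

section \<open>The inverse of the forward derivative\<close>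

locale tree_derivative = tree_hilbert_space +
  fixes e :: nat
  assumes one_le_e: "1 \<le> e"
begin

definition rho :: real where
  "rho = inverse (real p powr (1 / real e))"

definition rho_sum :: real where
  "rho_sum = 1 / (1 - rho)"

lemma one_lt_p_powr: "real p powr (1 / real e) > 1"
  using two_le_p one_le_e by (intro gr_one_powr) auto

lemma rho_pos: "rho > 0" and rho_less_1: "rho < 1"
  using one_lt_p_powr by (auto simp: rho_def inverse_less_1_iff)

lemma sums_rho_power: "(\<lambda>j. rho ^ j) sums rho_sum"
  unfolding rho_sum_def using rho_pos rho_less_1 by (intro geometric_sums) auto

lemma sums_rho_power_even: "(\<lambda>n. rho ^ (2 * n)) sums (1 / (1 - rho\<^sup>2))"
proof -
  have "(\<lambda>n. (rho\<^sup>2) ^ n) sums (1 / (1 - rho\<^sup>2))"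
    using rho_pos rho_less_1 by (intro geometric_sums) (simp add: abs_square_less_1)
  then show ?thesis by (simp add: power_mult)
qed

lemma p_powr_level: "real p powr (real n / real e) = inverse (rho ^ n)"
proof -
  have "real p powr (real n / real e) = (real p powr (1 / real e)) powr real n"
    by (simp add: powr_powr)
  also have "\<dots> = (real p powr (1 / real e)) ^ n"
    by (rule powr_realpow) (use one_lt_p_powr in linarith)
  finally show ?thesis by (simp add: rho_def power_inverse)
qed

definition descendant_avg :: "nat \<Rightarrow> tvec \<Rightarrow> nat \<Rightarrow> nat list \<Rightarrow> complex" where
  "descendant_avg j \<psi> m w = (\<Sum>u\<in>words q j. \<psi> m (w @ u)) / of_real (Q ^ j)"

text \<open>Solving \<open>D phi = psi\<close> level by level from infinity: \<open>phi_n(x)\<close> is the sum over \<open>j\<close> of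
  \<open>rho^(n+j)\<close> times the average of \<open>psi_(n+j)\<close> over the descendants of \<open>x\<close>.\<close>
definition Dinv :: "tvec \<Rightarrow> tvec" where
  "Dinv \<psi> = (\<lambda>n w. if w \<in> words q n then
      (\<Sum>j. of_real (rho ^ (n + j)) * descendant_avg j \<psi> (n + j) w) else 0)"

lemma norm_descendant_avg_squared_le:
  "(cmod (descendant_avg j \<psi> m w))\<^sup>2 \<le> (\<Sum>u\<in>words q j. (cmod (\<psi> m (w @ u)))\<^sup>2) / Q ^ j"
proof -
  have "(cmod (descendant_avg j \<psi> m w))\<^sup>2 = (cmod (\<Sum>u\<in>words q j. \<psi> m (w @ u)))\<^sup>2 / (Q ^ j)\<^sup>2"
    by (simp only: descendant_avg_def norm_divide norm_of_real abs_of_pos[OF Q_power_pos]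
        power_divide)
  also have "\<dots> \<le> Q ^ j * (\<Sum>u\<in>words q j. (cmod (\<psi> m (w @ u)))\<^sup>2) / (Q ^ j)\<^sup>2"
    using norm_sum_squared_le_card[of "\<lambda>u. \<psi> m (w @ u)" "words q j"]
    by (intro divide_right_mono) auto
  also have "\<dots> = (\<Sum>u\<in>words q j. (cmod (\<psi> m (w @ u)))\<^sup>2) / Q ^ j"
    using Q_power_pos[of j] by (simp add: power2_eq_square)
  finally show ?thesis .
qed

lemma sum_norm_descendant_avg_squared_le:
  "(\<Sum>w\<in>words q n. (cmod (descendant_avg j \<psi> (n + j) w))\<^sup>2) \<le> Q ^ n * L \<psi> (n + j)"
proof -
  have "(\<Sum>w\<in>words q n. (cmod (descendant_avg j \<psi> (n + j) w))\<^sup>2) \<le>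
        (\<Sum>w\<in>words q n. (\<Sum>u\<in>words q j. (cmod (\<psi> (n + j) (w @ u)))\<^sup>2) / Q ^ j)"
    by (intro sum_mono norm_descendant_avg_squared_le)
  also have "\<dots> = (\<Sum>v\<in>words q (n + j). (cmod (\<psi> (n + j) v))\<^sup>2) / Q ^ j"
    by (simp add: sum_words_append sum_divide_distrib)
  also have "\<dots> = Q ^ n * L \<psi> (n + j)"
    using Q_power_pos[of j] Q_power_pos[of n] by (simp add: level_sq_eq power_add field_simps)
  finally show ?thesis .
qed

lemma norm_descendant_avg_squared_le_sqnorm:
  assumes "\<psi> \<in> H" "w \<in> words q n"
  shows "(cmod (descendant_avg j \<psi> (n + j) w))\<^sup>2 \<le> Q ^ n * sqnorm \<psi>"
proof -
  have "(cmod (descendant_avg j \<psi> (n + j) w))\<^sup>2 \<le>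
        (\<Sum>w\<in>words q n. (cmod (descendant_avg j \<psi> (n + j) w))\<^sup>2)"
    using assms(2) by (intro member_le_sum) auto
  also have "\<dots> \<le> Q ^ n * sqnorm \<psi>"
    using sum_norm_descendant_avg_squared_le level_sq_le_sqnorm[OF assms(1)] Q_power_pos[of n]
    by (meson mult_left_mono order_trans less_imp_le)
  finally show ?thesis .
qed

lemma summable_Dinv_series:
  assumes "\<psi> \<in> H" "w \<in> words q n"
  shows "summable (\<lambda>j. rho ^ j * cmod (descendant_avg j \<psi> (n + j) w))"
    and "summable (\<lambda>j. rho ^ j * (cmod (descendant_avg j \<psi> (n + j) w))\<^sup>2)"
    and "summable (\<lambda>j. of_real (rho ^ (n + j)) * descendant_avg j \<psi> (n + j) w)"
proof -
  define M where "M = Q ^ n * sqnorm \<psi>"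
  have sq: "(cmod (descendant_avg j \<psi> (n + j) w))\<^sup>2 \<le> M" for j
    using norm_descendant_avg_squared_le_sqnorm[OF assms] by (simp add: M_def)
  then have abs: "cmod (descendant_avg j \<psi> (n + j) w) \<le> sqrt M" for j
    by (simp add: real_le_rsqrt)
  have geom: "summable (\<lambda>j. rho ^ j)" using sums_rho_power by (rule sums_summable)
  show abs_sm: "summable (\<lambda>j. rho ^ j * cmod (descendant_avg j \<psi> (n + j) w))"
    by (rule summable_comparison_test[OF _ summable_mult2[OF geom, of "sqrt M"]])
      (use abs rho_pos in \<open>auto intro!: mult_left_mono\<close>)
  show "summable (\<lambda>j. rho ^ j * (cmod (descendant_avg j \<psi> (n + j) w))\<^sup>2)"
    by (rule summable_comparison_test[OF _ summable_mult2[OF geom, of M]])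
      (use sq rho_pos in \<open>auto intro!: mult_left_mono\<close>)
  have "summable (\<lambda>j. norm (of_real (rho ^ (n + j)) * descendant_avg j \<psi> (n + j) w))"
    using summable_mult[OF abs_sm, of "rho ^ n"] rho_pos
    by (simp add: norm_mult norm_power power_add mult.assoc abs_of_pos)
  then show "summable (\<lambda>j. of_real (rho ^ (n + j)) * descendant_avg j \<psi> (n + j) w)"
    by (rule summable_norm_cancel)
qed

lemma norm_Dinv_squared_le:
  assumes "\<psi> \<in> H" "w \<in> words q n"
  shows "(cmod (Dinv \<psi> n w))\<^sup>2 \<le>
         rho ^ (2 * n) * rho_sum * (\<Sum>j. rho ^ j * (cmod (descendant_avg j \<psi> (n + j) w))\<^sup>2)"
proof -
  note sm = summable_Dinv_series[OF assms]
  define z where "z j = cmod (descendant_avg j \<psi> (n + j) w)" for j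
  have "cmod (Dinv \<psi> n w) \<le> (\<Sum>j. norm (of_real (rho ^ (n + j)) * descendant_avg j \<psi> (n + j) w))"
    using assms(2) summable_norm[of "\<lambda>j. of_real (rho ^ (n + j)) * descendant_avg j \<psi> (n + j) w"]
      summable_mult[OF sm(1), of "rho ^ n"] rho_pos
    by (simp add: Dinv_def norm_mult norm_power power_add mult.assoc abs_of_pos)
  also have "\<dots> = rho ^ n * (\<Sum>j. rho ^ j * z j)"
    using sm(1) rho_pos by (simp add: z_def norm_mult norm_power abs_of_pos power_add mult.assoc
        suminf_mult)
  finally have "(cmod (Dinv \<psi> n w))\<^sup>2 \<le> (rho ^ n * (\<Sum>j. rho ^ j * z j))\<^sup>2"
    by (intro power_mono) auto
  also have "\<dots> = rho ^ (2 * n) * (\<Sum>j. rho ^ j * z j)\<^sup>2"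
    by (simp add: power_mult_distrib power_mult[symmetric] mult.commute)
  also have "\<dots> \<le> rho ^ (2 * n) * (rho_sum * (\<Sum>j. rho ^ j * (z j)\<^sup>2))"
    using weighted_Cauchy_Schwarz_suminf(2)[of "\<lambda>j. rho ^ j" z] sm(2) rho_pos
      sums_summable[OF sums_rho_power] sums_unique[OF sums_rho_power]
    by (intro mult_left_mono) (auto simp: z_def)
  finally show ?thesis by (simp add: z_def mult.assoc)
qed

lemma level_sq_Dinv_le:
  assumes "\<psi> \<in> H"
  shows "L (Dinv \<psi>) n \<le> rho ^ (2 * n) * rho_sum\<^sup>2 * sqnorm \<psi>"
proof -
  define y where "y j w = (cmod (descendant_avg j \<psi> (n + j) w))\<^sup>2" for j w
  have sy: "summable (\<lambda>j. rho ^ j * y j w)" if "w \<in> words q n" for w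
    using summable_Dinv_series(2)[OF assms that] by (simp add: y_def)
  have "(\<Sum>w\<in>words q n. (cmod (Dinv \<psi> n w))\<^sup>2) \<le>
        (\<Sum>w\<in>words q n. rho ^ (2 * n) * rho_sum * (\<Sum>j. rho ^ j * y j w))"
    using norm_Dinv_squared_le[OF assms] by (intro sum_mono) (simp add: y_def)
  also have "\<dots> = rho ^ (2 * n) * rho_sum * (\<Sum>j. \<Sum>w\<in>words q n. rho ^ j * y j w)"
    using sy by (simp add: sum_distrib_left suminf_sum)
  also have "\<dots> \<le> rho ^ (2 * n) * rho_sum * (\<Sum>j. rho ^ j * (Q ^ n * sqnorm \<psi>))"
  proof (intro mult_left_mono suminf_le)
    fix j
    have "(\<Sum>w\<in>words q n. y j w) \<le> Q ^ n * sqnorm \<psi>"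
      using sum_norm_descendant_avg_squared_le[where n = n and j = j and \<psi> = \<psi>] level_sq_le_sqnorm[OF assms, of "n + j"]
        Q_power_pos[of n] unfolding y_def by (meson mult_left_mono order_trans less_imp_le)
    then show "(\<Sum>w\<in>words q n. rho ^ j * y j w) \<le> rho ^ j * (Q ^ n * sqnorm \<psi>)"
      using rho_pos by (simp add: mult_left_mono flip: sum_distrib_left)
    show "summable (\<lambda>j. \<Sum>w\<in>words q n. rho ^ j * y j w)" using sy by (intro summable_sum) auto
    show "summable (\<lambda>j. rho ^ j * (Q ^ n * sqnorm \<psi>))"
      using sums_rho_power by (intro summable_mult2 sums_summable)
  qed (use rho_pos rho_less_1 in \<open>simp add: rho_sum_def\<close>)
  also have "\<dots> = rho ^ (2 * n) * rho_sum * (rho_sum * (Q ^ n * sqnorm \<psi>))"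
    using sums_unique[OF sums_rho_power] suminf_mult2[OF sums_summable[OF sums_rho_power]] by simp
  finally show ?thesis
    using Q_power_pos[of n] by (simp add: level_sq_eq divide_le_eq power2_eq_square mult_ac)
qed

lemma Dinv_vanish: "w \<notin> words q n \<Longrightarrow> Dinv \<psi> n w = 0"
  by (simp add: Dinv_def)

lemma Dinv_in_H:
  assumes "\<psi> \<in> H"
  shows "Dinv \<psi> \<in> H"
proof -
  have "summable (\<lambda>n. rho ^ (2 * n) * (rho_sum\<^sup>2 * sqnorm \<psi>))"
    using sums_rho_power_even by (intro summable_mult2 sums_summable)
  then have "summable (L (Dinv \<psi>))"
    by (rule summable_comparison_test[rotated])
      (use level_sq_Dinv_le[OF assms] level_sq_nonneg in \<open>auto simp: mult.assoc\<close>)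
  then show ?thesis by (simp add: in_H_iff Dinv_vanish)
qed

lemma sqnorm_Dinv_le:
  assumes "\<psi> \<in> H"
  shows "sqnorm (Dinv \<psi>) \<le> rho_sum\<^sup>2 / (1 - rho\<^sup>2) * sqnorm \<psi>"
proof -
  have sums: "(\<lambda>n. rho ^ (2 * n) * (rho_sum\<^sup>2 * sqnorm \<psi>)) sums (1 / (1 - rho\<^sup>2) * (rho_sum\<^sup>2 * sqnorm \<psi>))"
    by (intro sums_mult2 sums_rho_power_even)
  have "sqnorm (Dinv \<psi>) \<le> (\<Sum>n. rho ^ (2 * n) * (rho_sum\<^sup>2 * sqnorm \<psi>))"
    unfolding sqnorm_def[of "Dinv \<psi>"] using level_sq_Dinv_le[OF assms]
    by (intro suminf_le summable_level_sq[OF Dinv_in_H[OF assms]] sums_summable[OF sums])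
      (simp add: mult.assoc)
  then show ?thesis using sums_unique[OF sums] by simp
qed

lemma sum_descendant_avg_snoc:
  "(\<Sum>s<q. descendant_avg j \<psi> m (w @ [s])) = of_real Q * descendant_avg (Suc j) \<psi> m w"
proof -
  have "(\<Sum>s<q. descendant_avg j \<psi> m (w @ [s])) =
        (\<Sum>s<q. \<Sum>u\<in>words q j. \<psi> m (w @ (s # u))) / of_real (Q ^ j)"
    by (simp add: descendant_avg_def sum_divide_distrib)
  also have "(\<Sum>s<q. \<Sum>u\<in>words q j. \<psi> m (w @ (s # u))) = (\<Sum>u\<in>words q (Suc j). \<psi> m (w @ u))"
    by (simp add: sum_words_Suc)
  finally show ?thesis using Q_pos by (simp add: descendant_avg_def field_simps)
qed

lemma Dop_Dinv:
  assumes "\<psi> \<in> H"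
  shows "Dop p e f (Dinv \<psi>) = \<psi>"
proof (intro ext)
  fix n w
  show "Dop p e f (Dinv \<psi>) n w = \<psi> n w"
  proof (cases "w \<in> words q n")
    case True
    define F where "F j = of_real (rho ^ (n + j)) * descendant_avg j \<psi> (n + j) w" for j
    have sF: "summable F"
      using summable_Dinv_series(3)[OF assms True] by (simp add: F_def[abs_def])
    have children: "w @ [s] \<in> words q (Suc n)" if "s < q" for s
      using True that by (auto simp: words_def)
    have "(\<Sum>s<q. Dinv \<psi> (Suc n) (w @ [s])) =
          (\<Sum>s<q. \<Sum>j. of_real (rho ^ (Suc n + j)) * descendant_avg j \<psi> (Suc n + j) (w @ [s]))"
      using children by (intro sum.cong refl) (simp add: Dinv_def)
    also have "\<dots> =
          (\<Sum>j. \<Sum>s<q. of_real (rho ^ (Suc n + j)) * descendant_avg j \<psi> (Suc n + j) (w @ [s]))"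
      using summable_Dinv_series(3)[OF assms children] by (intro suminf_sum[symmetric]) auto
    also have "\<dots> = (\<Sum>j. of_real Q * F (Suc j))"
      by (simp add: F_def sum_distrib_left[symmetric] sum_descendant_avg_snoc mult_ac)
    also have "\<dots> = of_real Q * (\<Sum>j. F (Suc j))"
      using sF by (intro suminf_mult) (simp add: summable_Suc_iff)
    finally have "Dinv \<psi> n w - (\<Sum>s<q. Dinv \<psi> (Suc n) (w @ [s])) / of_nat q = F 0"
      using True suminf_split_head[OF sF] Q_pos by (simp add: Dinv_def F_def[abs_def])
    then show ?thesis
      using True rho_pos by (simp add: Dop_def p_powr_level F_def descendant_avg_def)
  qed (simp add: Dop_def H_vanish[OF assms])
qed

lemma Dop_diff: "Dop p e f (\<phi> - \<psi>) = Dop p e f \<phi> - Dop p e f \<psi>"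
  by (auto simp: fun_eq_iff Dop_def sum_subtractf diff_divide_distrib right_diff_distrib)

text \<open>A vector in the kernel of \<open>D\<close> has nondecreasing level norms, which must tend to \<open>0\<close>.\<close>
lemma zero_if_Dop_eq_0:
  assumes "\<phi> \<in> H" "Dop p e f \<phi> = (\<lambda>n w. 0)"
  shows "\<phi> = (\<lambda>n w. 0)"
proof -
  have "L \<phi> n \<le> L \<phi> (Suc n)" for n
  proof (rule level_sq_le_Suc_if_mean_of_children)
    fix w assume "w \<in> words q n"
    then show "\<phi> n w = (\<Sum>s<q. \<phi> (Suc n) (w @ [s])) / of_real Q"
      using fun_cong[OF fun_cong[OF assms(2), of n], of w] rho_pos
      by (simp add: Dop_def p_powr_level)
  qed
  then have "\<exists>N. \<forall>m\<ge>N. L \<phi> n \<le> L \<phi> m" for n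
    by (blast intro: lift_Suc_mono_le)
  then have "L \<phi> n \<le> 0" for n
    by (rule LIMSEQ_le_const[OF summable_LIMSEQ_zero[OF summable_level_sq[OF assms(1)]]])
  then have "L \<phi> = (\<lambda>n. 0)"
    using level_sq_nonneg by (intro ext order_antisym) auto
  then have "sqnorm \<phi> = 0" by (simp add: sqnorm_def)
  then show ?thesis by (rule zero_if_sqnorm_eq_0[OF assms(1)])
qed

lemma inj_on_Dop: "inj_on (Dop p e f) (domD p e f)"
proof (rule inj_onI)
  fix \<phi> \<psi> assume "\<phi> \<in> domD p e f" "\<psi> \<in> domD p e f" and eq: "Dop p e f \<phi> = Dop p e f \<psi>"
  then have "\<phi> - \<psi> \<in> H" by (intro diff_in_H) (auto simp: domD_def)
  moreover have "Dop p e f (\<phi> - \<psi>) = (\<lambda>n w. 0)" by (simp add: Dop_diff eq fun_eq_iff)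
  ultimately have "\<phi> - \<psi> = (\<lambda>n w. 0)" by (rule zero_if_Dop_eq_0)
  then show "\<phi> = \<psi>" by (simp add: fun_eq_iff)
qed

lemma Dinv_in_domD: "\<psi> \<in> H \<Longrightarrow> Dinv \<psi> \<in> domD p e f"
  by (simp add: domD_def Dinv_in_H Dop_Dinv)

lemma bij_betw_Dop: "bij_betw (Dop p e f) (domD p e f) H"
proof (rule bij_betw_imageI[OF inj_on_Dop])
  show "Dop p e f ` domD p e f = H"
  proof
    show "Dop p e f ` domD p e f \<subseteq> H" by (auto simp: domD_def)
    show "H \<subseteq> Dop p e f ` domD p e f"
      using Dinv_in_domD Dop_Dinv by (metis image_eqI subsetI)
  qed
qed

lemma inv_Dop_eq_Dinv: "\<psi> \<in> H \<Longrightarrow> the_inv_into (domD p e f) (Dop p e f) \<psi> = Dinv \<psi>"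
  by (intro the_inv_into_f_eq inj_on_Dop Dop_Dinv Dinv_in_domD)

lemma bounded_op_inv_Dop: "bounded_op p f (the_inv_into (domD p e f) (Dop p e f))"
  unfolding bounded_op_def
proof (intro conjI ballI exI)
  fix \<psi> assume "\<psi> \<in> H"
  then show "the_inv_into (domD p e f) (Dop p e f) \<psi> \<in> H"
    by (simp add: inv_Dop_eq_Dinv Dinv_in_H)
  have "sqrt (sqnorm (Dinv \<psi>)) \<le> sqrt (rho_sum\<^sup>2 / (1 - rho\<^sup>2) * sqnorm \<psi>)"
    using sqnorm_Dinv_le[OF \<open>\<psi> \<in> H\<close>] by (rule real_sqrt_le_mono)
  then show "Hnorm p f (the_inv_into (domD p e f) (Dop p e f) \<psi>) \<le>
      sqrt (rho_sum\<^sup>2 / (1 - rho\<^sup>2)) * Hnorm p f \<psi>"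
    using \<open>\<psi> \<in> H\<close> by (simp only: inv_Dop_eq_Dinv Hnorm_eq_sqrt real_sqrt_mult)
qed

section \<open>Compactness and the Hilbert-Schmidt property\<close>

lemma compact_op_inv_Dop: "compact_op p f (the_inv_into (domD p e f) (Dop p e f))"
  unfolding compact_op_def
proof (intro allI impI)
  fix \<psi> :: "nat \<Rightarrow> tvec"
  assume \<psi>H: "\<forall>k. \<psi> k \<in> H" and "\<exists>B. \<forall>k. Hnorm p f (\<psi> k) \<le> B"
  then obtain B where B: "\<And>k. Hnorm p f (\<psi> k) \<le> B" by blast
  have sqnorm_le: "sqnorm (\<psi> k) \<le> B\<^sup>2" for k
  proof -
    have "sqnorm (\<psi> k) = (Hnorm p f (\<psi> k))\<^sup>2" using \<psi>H by (simp add: Hnorm_squared)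
    also have "\<dots> \<le> B\<^sup>2"
      using B[of k] \<psi>H by (intro power_mono) (simp_all add: Hnorm_eq_sqrt sqnorm_nonneg)
    finally show ?thesis .
  qed
  have dom: "L (Dinv (\<psi> k)) n \<le> rho ^ (2 * n) * (rho_sum\<^sup>2 * B\<^sup>2)" for k n
  proof -
    have "\<psi> k \<in> H" using \<psi>H ..
    then have "L (Dinv (\<psi> k)) n \<le> rho ^ (2 * n) * rho_sum\<^sup>2 * sqnorm (\<psi> k)"
      by (rule level_sq_Dinv_le)
    also have "\<dots> \<le> rho ^ (2 * n) * rho_sum\<^sup>2 * B\<^sup>2"
      by (rule mult_left_mono[OF sqnorm_le]) (use rho_pos in simp)
    finally show ?thesis by (simp only: mult.assoc)
  qed
  have summable: "summable (\<lambda>n. rho ^ (2 * n) * (rho_sum\<^sup>2 * B\<^sup>2))"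
    using sums_rho_power_even by (intro summable_mult2 sums_summable)
  have "Dinv (\<psi> k) \<in> H" for k using \<psi>H by (simp add: Dinv_in_H)
  then obtain R \<phi> where "strict_mono R" "\<phi> \<in> H"
    and "(\<lambda>k. sqnorm (Dinv (\<psi> (R k)) - \<phi>)) \<longlonglongrightarrow> 0"
    using convergent_subseq_if_level_dominated[where x = "\<lambda>k. Dinv (\<psi> k)", OF _ dom summable]
    by blast
  moreover from tendsto_real_sqrt[OF this(3)]
  have "(\<lambda>k. sqrt (sqnorm (Dinv (\<psi> (R k)) - \<phi>))) \<longlonglongrightarrow> 0" by simp
  then have "(\<lambda>k. Hnorm p f (the_inv_into (domD p e f) (Dop p e f) (\<psi> (R k)) - \<phi>)) \<longlonglongrightarrow> 0"
    using \<psi>H by (simp add: inv_Dop_eq_Dinv Hnorm_eq_sqrt)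
  ultimately show "\<exists>R \<phi>. strict_mono R \<and> \<phi> \<in> H \<and>
      (\<lambda>k. Hnorm p f (the_inv_into (domD p e f) (Dop p e f) (\<psi> (R k)) - \<phi>)) \<longlonglongrightarrow> 0"
    by blast
qed

lemma Dinv_single_level:
  assumes single: "\<And>n v. n \<noteq> k \<Longrightarrow> \<psi> n v = 0" and "v \<in> words q n"
  shows "Dinv \<psi> n v = (if n \<le> k then of_real (rho ^ k) * descendant_avg (k - n) \<psi> k v else 0)"
proof -
  define g where "g j = of_real (rho ^ (n + j)) * descendant_avg j \<psi> (n + j) v" for j
  have g0: "g j = 0" if "n + j \<noteq> k" for j
    using that single by (simp add: g_def descendant_avg_def)
  have "Dinv \<psi> n v = suminf g"
    using assms(2) by (simp add: Dinv_def g_def[abs_def])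
  also have "\<dots> = (\<Sum>j\<in>{k - n}. g j)"
    using g0 by (intro suminf_finite) auto
  also have "\<dots> = (if n \<le> k then of_real (rho ^ k) * descendant_avg (k - n) \<psi> k v else 0)"
    using g0[of "k - n"] by (auto simp: g_def)
  finally show ?thesis .
qed

lemma level_sq_Dinv_single_level_le:
  assumes single: "\<And>n v. n \<noteq> k \<Longrightarrow> \<psi> n v = 0"
  shows "L (Dinv \<psi>) n \<le> (if n \<le> k then rho ^ (2 * k) * L \<psi> k else 0)"
proof (cases "n \<le> k")
  case True
  have "(cmod (of_real (rho ^ k) * z))\<^sup>2 = rho ^ (2 * k) * (cmod z)\<^sup>2" for z :: complex
    using rho_pos by (simp add: norm_mult norm_power abs_of_pos power_mult_distrib
        flip: power_mult[of rho k 2, unfolded mult.commute[of k]])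
  then have "(\<Sum>v\<in>words q n. (cmod (Dinv \<psi> n v))\<^sup>2) =
             rho ^ (2 * k) * (\<Sum>v\<in>words q n. (cmod (descendant_avg (k - n) \<psi> k v))\<^sup>2)"
    using True by (simp add: Dinv_single_level[OF single] sum_distrib_left)
  also have "\<dots> \<le> rho ^ (2 * k) * (Q ^ n * L \<psi> k)"
    using rho_pos sum_norm_descendant_avg_squared_le[where n = n and j = "k - n" and \<psi> = \<psi>] True
    by (intro mult_left_mono) auto
  finally show ?thesis
    using True Q_power_pos[of n] by (simp add: level_sq_eq divide_le_eq mult_ac)
qed (simp add: level_sq_eq Dinv_single_level[OF single])

lemma sqnorm_Dinv_single_level_le:
  assumes "\<psi> \<in> H" and single: "\<And>n v. n \<noteq> k \<Longrightarrow> \<psi> n v = 0"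
  shows "sqnorm (Dinv \<psi>) \<le> (real k + 1) * rho ^ (2 * k) * L \<psi> k"
proof -
  define c where "c = rho ^ (2 * k) * L \<psi> k"
  have "sqnorm (Dinv \<psi>) \<le> (\<Sum>n. if n \<le> k then c else 0)"
    unfolding sqnorm_def c_def
    by (intro suminf_le level_sq_Dinv_single_level_le single summable_level_sq Dinv_in_H assms(1)
        summable_finite[of "{..k}"]) auto
  also have "\<dots> = (\<Sum>n\<le>k. c)" by (subst suminf_finite[of "{..k}"]) auto
  finally show ?thesis by (simp add: c_def mult_ac add_ac)
qed

lemma sqnorm_Dinv_unit_vec_le:
  assumes "w \<in> words q k"
  shows "sqnorm (Dinv (unit_vec k w)) \<le> (real k + 1) * rho ^ (2 * k)"
proof -
  have "sqnorm (Dinv (unit_vec k w)) \<le> (real k + 1) * rho ^ (2 * k) * L (unit_vec k w) k"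
    by (rule sqnorm_Dinv_single_level_le[OF unit_vec_in_H[OF assms]]) (simp add: unit_vec_def)
  then show ?thesis using level_sq_unit_vec[OF assms, of k] by simp
qed

lemma hilbert_schmidt_inv_Dop_if:
  assumes "e = 1" "f = 1"
  shows "hilbert_schmidt p f (the_inv_into (domD p e f) (Dop p e f))"
proof -
  define g where "g = (\<lambda>b. (Hnorm p f (the_inv_into (domD p e f) (Dop p e f) b))\<^sup>2)"
  have "Q * rho = 1" unfolding rho_def using assms by simp
  have g_unit_vec: "g (unit_vec k w) \<le> (real k + 1) * rho ^ (2 * k)" if "w \<in> words q k" for k w
    using sqnorm_Dinv_unit_vec_le[OF that] that
    by (simp add: g_def inv_Dop_eq_Dinv unit_vec_in_H Hnorm_squared Dinv_in_H)
  have "(g \<circ> (\<lambda>(k, w). unit_vec k w)) summable_on Sigma UNIV (words q)"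
  proof (rule summable_on_Sigma_finite_fibres)
    show "summable (\<lambda>k. \<Sum>w\<in>words q k. (g \<circ> (\<lambda>(k, w). unit_vec k w)) (k, w))"
    proof (rule summable_comparison_test[OF _ summable_Suc_times_power[of rho]])
      show "\<exists>N. \<forall>k\<ge>N. norm (\<Sum>w\<in>words q k. (g \<circ> (\<lambda>(k, w). unit_vec k w)) (k, w))
                                  \<le> (real k + 1) * rho ^ k"
      proof (intro exI[of _ 0] allI impI)
        fix k :: nat
        have "(\<Sum>w\<in>words q k. g (unit_vec k w)) \<le> (\<Sum>w\<in>words q k. (real k + 1) * rho ^ (2 * k))"
          by (intro sum_mono g_unit_vec)
        also have "\<dots> = (real k + 1) * rho ^ k * (Q * rho) ^ k"
          unfolding mult_2 power_add by (simp add: power_mult_distrib mult_ac)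
        also have "\<dots> = (real k + 1) * rho ^ k"
          using \<open>Q * rho = 1\<close> by simp
        finally show "norm (\<Sum>w\<in>words q k. (g \<circ> (\<lambda>(k, w). unit_vec k w)) (k, w))
                        \<le> (real k + 1) * rho ^ k"
          by (simp add: g_def sum_nonneg)
      qed
    qed (use rho_pos rho_less_1 in auto)
  qed (auto simp: g_def)
  then have "g summable_on standard_basis"
    unfolding standard_basis_def vertices_def using inj_on_unit_vec[unfolded vertices_def]
    by (simp add: summable_on_reindex)
  then show ?thesis
    unfolding hilbert_schmidt_def using orthonormal_basis_standard_basis unfolding g_def by blast
qed

text \<open>The adjoint of \<open>Dinv\<close> maps \<open>unit_vec k w\<close> to \<open>rho^m\<close> times the normalisation
  of \<open>unit_vec k w\<close> on every descendant of \<open>w\<close> at every level \<open>m \<ge> k\<close>.\<close>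
definition adjoint_unit_vec :: "nat \<Rightarrow> nat list \<Rightarrow> tvec" where
  "adjoint_unit_vec k w = (\<lambda>m v. if k \<le> m \<and> v \<in> words q m \<and> take k v = w
      then of_real (rho ^ m * sqrt (Q ^ k)) else 0)"

lemma level_sq_adjoint_unit_vec:
  assumes "w \<in> words q k"
  shows "L (adjoint_unit_vec k w) m = (if k \<le> m then rho ^ (2 * m) else 0)"
proof (cases "k \<le> m")
  case True
  then obtain j where m: "m = k + j" using le_Suc_ex by blast
  have sq: "(rho ^ m * sqrt (Q ^ k))\<^sup>2 = rho ^ (2 * m) * Q ^ k"
    using Q_power_pos[of k] by (simp add: power_mult_distrib power_mult[symmetric] mult.commute)
  have "(\<Sum>v\<in>words q m. (cmod (adjoint_unit_vec k w m v))\<^sup>2) =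
        (\<Sum>v\<in>words q (k + j). if take k v = w then rho ^ (2 * m) * Q ^ k else 0)"
  proof (intro sum.cong)
    fix v assume "v \<in> words q (k + j)"
    moreover have "(cmod (complex_of_real y))\<^sup>2 = y\<^sup>2" for y
      by (simp only: norm_of_real power2_abs)
    ultimately show "(cmod (adjoint_unit_vec k w m v))\<^sup>2 =
        (if take k v = w then rho ^ (2 * m) * Q ^ k else 0)"
      using True m sq by (auto simp: adjoint_unit_vec_def simp del: of_real_mult of_real_power)
  qed (simp add: m)
  also have "\<dots> = Q ^ j * (rho ^ (2 * m) * Q ^ k)"
    by (simp add: sum_words_prefix[OF assms])
  finally show ?thesis
    using True Q_power_pos[of m] by (simp add: level_sq_eq m power_add field_simps)
qed (simp add: level_sq_eq adjoint_unit_vec_def)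

lemma adjoint_unit_vec_in_H:
  assumes "w \<in> words q k"
  shows "adjoint_unit_vec k w \<in> H"
proof -
  have "summable (L (adjoint_unit_vec k w))"
    by (rule summable_comparison_test[OF _ sums_summable[OF sums_rho_power_even]])
      (use level_sq_adjoint_unit_vec[OF assms] rho_pos in \<open>auto simp: level_sq_nonneg\<close>)
  then show ?thesis by (simp add: in_H_iff adjoint_unit_vec_def)
qed

lemma sqnorm_adjoint_unit_vec_ge:
  "w \<in> words q k \<Longrightarrow> rho ^ (2 * k) \<le> sqnorm (adjoint_unit_vec k w)"
  using level_sq_le_sqnorm[OF adjoint_unit_vec_in_H, of w k k] level_sq_adjoint_unit_vec[of w k k]
  by simp

lemma level_inner_adjoint_unit_vec:
  assumes "w \<in> words q k"
  shows "level_inner b (adjoint_unit_vec k w) (j + k) =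
    of_real (rho ^ (k + j)) * descendant_avg j b (k + j) w / of_real (sqrt (Q ^ k))"
proof -
  define c :: complex where "c = of_real (sqrt (Q ^ k))"
  define X where "X = (\<Sum>u\<in>words q j. b (k + j) (w @ u))"
  have "c \<noteq> 0" using Q_power_pos[of k] by (simp add: c_def)
  have "(\<Sum>v\<in>words q (j + k). b (j + k) v * cnj (adjoint_unit_vec k w (j + k) v)) =
        (\<Sum>v\<in>words q (k + j). if take k v = w then b (k + j) v * (of_real (rho ^ (k + j)) * c) else 0)"
    by (intro sum.cong) (auto simp: adjoint_unit_vec_def c_def add.commute)
  also have "\<dots> = X * (of_real (rho ^ (k + j)) * c)"
    by (simp add: sum_words_prefix[OF assms] X_def sum_distrib_right)
  finally have num: "(\<Sum>v\<in>words q (j + k). b (j + k) v * cnj (adjoint_unit_vec k w (j + k) v)) =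
      X * (of_real (rho ^ (k + j)) * c)" .
  have "sqrt (Q ^ k) * sqrt (Q ^ k) = Q ^ k" using Q_power_pos[of k] by simp
  then have den: "(of_real (Q ^ (j + k)) :: complex) = of_real (Q ^ j) * (c * c)"
    by (simp only: c_def power_add of_real_mult[symmetric])
  have "level_inner b (adjoint_unit_vec k w) (j + k) =
        X * (of_real (rho ^ (k + j)) * c) / (of_real (Q ^ j) * (c * c))"
    by (simp only: level_inner_def num den)
  also have "\<dots> = of_real (rho ^ (k + j)) * (X / of_real (Q ^ j)) / c"
    using \<open>c \<noteq> 0\<close> Q_power_pos[of j] by (simp add: field_simps)
  finally show ?thesis by (simp only: descendant_avg_def X_def c_def)
qed

lemma Hinner_Dinv_unit_vec:
  assumes "b \<in> H" "w \<in> words q k"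
  shows "Hinner p f (Dinv b) (unit_vec k w) = Hinner p f b (adjoint_unit_vec k w)"
proof -
  define c :: complex where "c = of_real (sqrt (Q ^ k))"
  have "Hinner p f (Dinv b) (unit_vec k w) =
        (\<Sum>j. of_real (rho ^ (k + j)) * descendant_avg j b (k + j) w) / c"
    using assms(2) by (simp add: Hinner_unit_vec Dinv_def c_def)
  also have "\<dots> = (\<Sum>j. level_inner b (adjoint_unit_vec k w) (j + k))"
    using suminf_divide[OF summable_Dinv_series(3)[OF assms], of c]
    by (simp add: level_inner_adjoint_unit_vec[OF assms(2)] c_def)
  also have "\<dots> = Hinner p f b (adjoint_unit_vec k w)"
  proof -
    have "level_inner b (adjoint_unit_vec k w) i = 0" if "i < k" for i
      using that by (simp add: level_inner_def adjoint_unit_vec_def)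
    moreover have "Hinner p f b (adjoint_unit_vec k w) =
        (\<Sum>j. level_inner b (adjoint_unit_vec k w) (j + k)) + (\<Sum>i<k. level_inner b (adjoint_unit_vec k w) i)"
      unfolding Hinner_eq_suminf
      by (rule suminf_split_initial_segment[OF summable_level_inner[OF assms(1)
            adjoint_unit_vec_in_H[OF assms(2)]]])
    ultimately show ?thesis by simp
  qed
  finally show ?thesis .
qed

lemma sum_norm_Hinner_adjoint_unit_vec_le:
  assumes "b \<in> H"
  shows "(\<Sum>i\<in>Sigma {..<K} (words q). (cmod (Hinner p f (adjoint_unit_vec (fst i) (snd i)) b))\<^sup>2)
           \<le> sqnorm (Dinv b)"
proof -
  have "(cmod (Hinner p f (adjoint_unit_vec k w) b))\<^sup>2 = (cmod (Dinv b k w))\<^sup>2 / Q ^ k"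
    if "w \<in> words q k" for k w
  proof -
    have "cmod (Hinner p f (adjoint_unit_vec k w) b) = cmod (Hinner p f (Dinv b) (unit_vec k w))"
      using Hinner_commute[OF assms adjoint_unit_vec_in_H[OF that]]
      by (simp add: Hinner_Dinv_unit_vec[OF assms that])
    then show ?thesis
      using Q_power_pos[of k] by (simp add: Hinner_unit_vec[OF that] norm_divide power_divide)
  qed
  then have "(\<Sum>i\<in>Sigma {..<K} (words q). (cmod (Hinner p f (adjoint_unit_vec (fst i) (snd i)) b))\<^sup>2)
             = (\<Sum>k<K. \<Sum>w\<in>words q k. (cmod (Dinv b k w))\<^sup>2 / Q ^ k)"
    unfolding sum_Sigma_words by (intro sum.cong refl) simp
  also have "\<dots> = (\<Sum>k<K. L (Dinv b) k)"
    by (simp add: level_sq_eq sum_divide_distrib)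
  also have "\<dots> \<le> sqnorm (Dinv b)"
    by (intro sum_level_sq_le_sqnorm Dinv_in_H assms) simp
  finally show ?thesis .
qed

lemma sum_sqnorm_adjoint_unit_vec_le:
  assumes B: "orthonormal_basis p f B" and sm: "(\<lambda>b. sqnorm (Dinv b)) summable_on B"
  shows "(\<Sum>i\<in>Sigma {..<K} (words q). sqnorm (adjoint_unit_vec (fst i) (snd i)))
           \<le> (\<Sum>\<^sub>\<infinity>b\<in>B. sqnorm (Dinv b))"
proof -
  define C where "C = Sigma {..<K} (words q)"
  define \<phi> where "\<phi> = (\<lambda>i b. (cmod (Hinner p f (adjoint_unit_vec (fst i) (snd i)) b))\<^sup>2)"
  have "finite C" by (simp add: C_def)
  have BH: "B \<subseteq> H" using B by (simp add: orthonormal_basis_def)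
  have sum_le: "(\<Sum>i\<in>C. \<phi> i b) \<le> sqnorm (Dinv b)" if "b \<in> B" for b
    using sum_norm_Hinner_adjoint_unit_vec_le[of b K] that BH by (auto simp: C_def \<phi>_def)
  have summable: "\<phi> i summable_on B" if "i \<in> C" for i
  proof (rule summable_on_comparison_test[OF sm])
    fix b assume "b \<in> B"
    have "\<phi> i b \<le> (\<Sum>i\<in>C. \<phi> i b)"
      using \<open>finite C\<close> that by (intro member_le_sum) (auto simp: \<phi>_def)
    then show "\<phi> i b \<le> sqnorm (Dinv b)" using sum_le[OF \<open>b \<in> B\<close>] by simp
  qed (simp add: \<phi>_def)
  have sum_has_sum: "((\<lambda>b. \<Sum>i\<in>C. \<phi> i b) has_sum (\<Sum>i\<in>C. \<Sum>\<^sub>\<infinity>b\<in>B. \<phi> i b)) B"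
    by (intro has_sum_sum_finite \<open>finite C\<close> has_sum_infsum summable)
  have "sqnorm (adjoint_unit_vec (fst i) (snd i)) \<le> (\<Sum>\<^sub>\<infinity>b\<in>B. \<phi> i b)" if "i \<in> C" for i
  proof -
    from that obtain k w where i: "i = (k, w)" "w \<in> words q k" by (auto simp: C_def)
    show ?thesis
      using sqnorm_le_infsum_Hinner[OF B adjoint_unit_vec_in_H[OF i(2)]] summable[OF that]
      by (simp add: i \<phi>_def)
  qed
  then have "(\<Sum>i\<in>C. sqnorm (adjoint_unit_vec (fst i) (snd i))) \<le> (\<Sum>i\<in>C. \<Sum>\<^sub>\<infinity>b\<in>B. \<phi> i b)"
    by (rule sum_mono)
  also have "\<dots> = (\<Sum>\<^sub>\<infinity>b\<in>B. \<Sum>i\<in>C. \<phi> i b)"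
    using infsumI[OF sum_has_sum] by simp
  also have "\<dots> \<le> (\<Sum>\<^sub>\<infinity>b\<in>B. sqnorm (Dinv b))"
    by (rule infsum_mono[OF has_sum_imp_summable[OF sum_has_sum] sm sum_le])
  finally show ?thesis by (simp add: C_def)
qed

lemma one_le_Q_rho_squared:
  assumes "1 \<le> f" "\<not> (e = 1 \<and> f = 1)"
  shows "1 \<le> Q * rho\<^sup>2"
proof -
  have "2 / real e \<le> real f"
  proof (cases "e = 1")
    case False
    then have "2 / real e \<le> 1" using one_le_e by simp
    then show ?thesis using assms(1) by linarith
  qed (use assms in simp)
  then have "real p powr (2 / real e) \<le> Q"
    using powr_mono[of "2 / real e" "real f" "real p"] two_le_p by (simp add: powr_realpow)
  moreover have "rho\<^sup>2 * real p powr (2 / real e) = 1"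
    using p_powr_level[of 2] rho_pos by (simp add: power_inverse)
  ultimately show ?thesis
    using mult_left_mono[of "real p powr (2 / real e)" Q "rho\<^sup>2"] by (simp add: mult.commute)
qed

lemma eq_1_if_hilbert_schmidt_inv_Dop:
  assumes "1 \<le> f" and "hilbert_schmidt p f (the_inv_into (domD p e f) (Dop p e f))"
  shows "e = 1 \<and> f = 1"
proof (rule ccontr)
  assume "\<not> (e = 1 \<and> f = 1)"
  obtain B where B: "orthonormal_basis p f B"
    and hs: "(\<lambda>b. (Hnorm p f (the_inv_into (domD p e f) (Dop p e f) b))\<^sup>2) summable_on B"
    using assms(2) by (auto simp: hilbert_schmidt_def)
  have "(Hnorm p f (the_inv_into (domD p e f) (Dop p e f) b))\<^sup>2 = sqnorm (Dinv b)"
    if "b \<in> B" for b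
    using B that by (auto simp: orthonormal_basis_def inv_Dop_eq_Dinv Hnorm_squared Dinv_in_H)
  then have sm: "(\<lambda>b. sqnorm (Dinv b)) summable_on B"
    by (rule summable_on_cong[THEN iffD1, OF _ hs])
  have "real K \<le> (\<Sum>\<^sub>\<infinity>b\<in>B. sqnorm (Dinv b))" for K
  proof -
    have "real K \<le> (\<Sum>k<K. (Q * rho\<^sup>2) ^ k)"
      using one_le_Q_rho_squared[OF assms(1) \<open>\<not> (e = 1 \<and> f = 1)\<close>]
      using sum_mono[of "{..<K}" "\<lambda>_. 1" "\<lambda>k. (Q * rho\<^sup>2) ^ k"] by (simp add: one_le_power)
    also have "\<dots> = (\<Sum>k<K. \<Sum>w\<in>words q k. rho ^ (2 * k))"
      by (simp add: power_mult_distrib power_mult)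
    also have "\<dots> = (\<Sum>i\<in>Sigma {..<K} (words q). rho ^ (2 * fst i))"
      by (simp add: sum_Sigma_words)
    also have "\<dots> \<le> (\<Sum>i\<in>Sigma {..<K} (words q). sqnorm (adjoint_unit_vec (fst i) (snd i)))"
      by (intro sum_mono sqnorm_adjoint_unit_vec_ge) auto
    also have "\<dots> \<le> (\<Sum>\<^sub>\<infinity>b\<in>B. sqnorm (Dinv b))"
      by (rule sum_sqnorm_adjoint_unit_vec_le[OF B sm])
    finally show ?thesis .
  qed
  moreover obtain K :: nat where "(\<Sum>\<^sub>\<infinity>b\<in>B. sqnorm (Dinv b)) < real K"
    using reals_Archimedean2 by blast
  ultimately show False by (meson not_le)
qed

end

theorem mainTheorem1:
  fixes p e f :: nat
  assumes "prime p" and "e \<ge> 1" and "f \<ge> 1"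
  shows "bij_betw (Dop p e f) (domD p e f) (Hspace p f) \<and>
         bounded_op p f (the_inv_into (domD p e f) (Dop p e f)) \<and>
         compact_op p f (the_inv_into (domD p e f) (Dop p e f)) \<and>
         (hilbert_schmidt p f (the_inv_into (domD p e f) (Dop p e f))
            \<longleftrightarrow> (e = 1 \<and> f = 1))"
proof -
  interpret tree_derivative p f e
    using assms by unfold_locales (simp_all add: prime_ge_2_nat)
  show ?thesis
    using bij_betw_Dop bounded_op_inv_Dop compact_op_inv_Dop hilbert_schmidt_inv_Dop_if
      eq_1_if_hilbert_schmidt_inv_Dop[OF \<open>f \<ge> 1\<close>] by blast
qed

end
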